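(* Let $\mathcal M$ be a sufficiently saturated geometric structure with universe $M$, and let $d$ be a natural number. Let $\mathbf x=(x_1,\dots,x_n)$ and $y$ be variables, and for $i=1,\dots,r$ let $C_i(\mathbf x^i,y)$ be a formula, where $\mathbf x^i$ is a subtuple of $\mathbf x$, defining an $\mathrm{acl}(\emptyset)$-definable $(|\mathbf x^i|+1)$-curve. Then the formula $$\exists^{\ge d}y\ \bigwedge_{i=1}^r C_i(\mathbf x^i,y)$$ defines a boolean combination of $\mathrm{acl}(\emptyset)$-definable curve-based cylinders (in the variables $\mathbf x$).
   Context: A structure $\mathcal M$ is a geometric structure if every model of its theory satisfies: (1) Exchange: $a\in\mathrm{acl}(bC)\setminus\mathrm{acl}(C)\Rightarrow b\in\mathrm{acl}(aC)$; (2) Uniform finiteness: for each formula $\psi(y,\mathbf w)$ there is $k$ such that for every tuple $\mathbf a$ the set $\{b:\psi(b,\mathbf a)\}$ is infinite or has size $\le k$. Dimension of a definable set $X\subseteq M^n$ (defined by $\Phi$ over parameters $B$): the largest $d$ such that in a saturated extension some tuple satisfying $\Phi$ has a subtuple $(a_{i_1},\dots,a_{i_d})$ with $a_{i_{j+1}}\notin\mathrm{acl}(\{a_{i_1},\dots,a_{i_j}\}\cup B)$. An $A$-definable $n$-curve is a subset of $M^n$ of dimension $\le 1$ definable with parameters from $A$. A set $\tilde C\subseteq M^m$ is an $A$-definable cylinder based on an $n$-curve if there are indices $1\le i_1<\dots<i_n\le m$ and an $A$-definable $n$-curve $C$ with $\tilde C=\{(x_1,\dots,x_m)\in M^m:(x_{i_1},\dots,x_{i_n})\in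 C\}$; an $A$-definable curve-based cylinder is such a cylinder for some $n$. "$\mathrm{acl}(\emptyset)$-definable" means definable with parameters from $\mathrm{acl}(\emptyset)$. $\exists^{\ge d}y$ means "there exist at least $d$ distinct $y$". *)

theory Defs
  imports Main
begin

datatype 'f trm = Var nat | Fn 'f "'f trm list"

datatype ('f, 'r) fm =
    Eq "'f trm" "'f trm"
  | Rl 'r "'f trm list"
  | Neg "('f, 'r) fm"
  | Conj "('f, 'r) fm" "('f, 'r) fm"
  | Ex nat "('f, 'r) fm"

text \<open>A structure with universe the whole type 'a: interpretations of the
function and relation symbols.\<close>

type_synonym ('f, 'r, 'a) struct = "('f \<Rightarrow> 'a list \<Rightarrow> 'a) \<times> ('r \<Rightarrow> 'a list \<Rightarrow> bool)"

primrec evalt :: "('f, 'r, 'a) struct \<Rightarrow> (nat \<Rightarrow> 'a) \<Rightarrow> 'f trm \<Rightarrow> 'a" where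
  "evalt M e (Var i) = e i"
| "evalt M e (Fn f ts) = fst M f (map (evalt M e) ts)"

primrec sat :: "('f, 'r, 'a) struct \<Rightarrow> ('f, 'r) fm \<Rightarrow> (nat \<Rightarrow> 'a) \<Rightarrow> bool" where
  "sat M (Eq s t) e = (evalt M e s = evalt M e t)"
| "sat M (Rl R ts) e = snd M R (map (evalt M e) ts)"
| "sat M (Neg \<phi>) e = (\<not> sat M \<phi> e)"
| "sat M (Conj \<phi> \<psi>) e = (sat M \<phi> e \<and> sat M \<psi> e)"
| "sat M (Ex x \<phi>) e = (\<exists>a. sat M \<phi> (e(x := a)))"

primrec fvt :: "'f trm \<Rightarrow> nat set" where
  "fvt (Var i) = {i}"
| "fvt (Fn f ts) = \<Union> (set (map fvt ts))"

primrec fv :: "('f, 'r) fm \<Rightarrow> nat set" where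
  "fv (Eq s t) = fvt s \<union> fvt t"
| "fv (Rl R ts) = \<Union> (set (map fvt ts))"
| "fv (Neg \<phi>) = fv \<phi>"
| "fv (Conj \<phi> \<psi>) = fv \<phi> \<union> fv \<psi>"
| "fv (Ex x \<phi>) = fv \<phi> - {x}"

text \<open>Tuples in M^n are lists of length n. The set defined in M^n by \<phi> where
variables 0..n-1 are the tuple variables and every other free variable v of \<phi>
is a parameter, interpreted as e v.\<close>

definition defset :: "('f, 'r, 'a) struct \<Rightarrow> nat \<Rightarrow> ('f, 'r) fm \<Rightarrow> (nat \<Rightarrow> 'a) \<Rightarrow> 'a list set" where
  "defset M n \<phi> e = {xs. length xs = n \<and> sat M \<phi> (\<lambda>i. if i < n then xs ! i else e i)}"

definition params :: "nat \<Rightarrow> ('f, 'r) fm \<Rightarrow> (nat \<Rightarrow> 'a) \<Rightarrow> 'a set" where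
  "params n \<phi> e = e ` (fv \<phi> - {..<n})"

definition definable :: "('f, 'r, 'a) struct \<Rightarrow> 'a set \<Rightarrow> nat \<Rightarrow> 'a list set \<Rightarrow> bool" where
  "definable M A n X \<longleftrightarrow> (\<exists>\<phi> e. params n \<phi> e \<subseteq> A \<and> X = defset M n \<phi> e)"

definition acl :: "('f, 'r, 'a) struct \<Rightarrow> 'a set \<Rightarrow> 'a set" where
  "acl M B = {a. \<exists>\<phi> e. params 1 \<phi> e \<subseteq> B \<and> finite {b. sat M \<phi> (e(0 := b))} \<and> sat M \<phi> (e(0 := a))}"

definition exchange :: "('f, 'r, 'a) struct \<Rightarrow> bool" where
  "exchange M \<longleftrightarrow> (\<forall>a b C. a \<in> acl M (insert b C) - acl M C \<longrightarrow> b \<in> acl M (insert a C))"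

text \<open>Uniform finiteness: for \<psi>(y, w) (y = variable 0, w = the other variables).\<close>
definition uniformly_finite :: "('f, 'r, 'a) struct \<Rightarrow> bool" where
  "uniformly_finite M \<longleftrightarrow> (\<forall>\<psi>. \<exists>k::nat. \<forall>e.
      infinite {b. sat M \<psi> (e(0 := b))} \<or> card {b. sat M \<psi> (e(0 := b))} \<le> k)"

definition geometric :: "('f, 'r, 'a) struct \<Rightarrow> bool" where
  "geometric M \<longleftrightarrow> exchange M \<and> uniformly_finite M"

text \<open>omega-saturation: every finitely satisfiable set of formulas in the variable 0
with finitely many parameters (the values of e) is realised in M.\<close>
definition omega_saturated :: "('f, 'r, 'a) struct \<Rightarrow> bool" where
  "omega_saturated M \<longleftrightarrow> (\<forall>(\<Sigma> :: ('f, 'r) fm set) (e :: nat \<Rightarrow> 'a). finite (range e) \<longrightarrow>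
      (\<forall>\<Sigma>0 \<subseteq> \<Sigma>. finite \<Sigma>0 \<longrightarrow> (\<exists>b. \<forall>\<phi>\<in>\<Sigma>0. sat M \<phi> (e(0 := b)))) \<longrightarrow>
      (\<exists>b. \<forall>\<phi>\<in>\<Sigma>. sat M \<phi> (e(0 := b))))"

definition indep_ge :: "('f, 'r, 'a) struct \<Rightarrow> 'a set \<Rightarrow> 'a list set \<Rightarrow> nat \<Rightarrow> bool" where
  "indep_ge M B X d \<longleftrightarrow> (\<exists>xs\<in>X. \<exists>idx. length idx = d \<and> sorted_wrt (<) idx \<and>
      (\<forall>i\<in>set idx. i < length xs) \<and>
      (\<forall>j<d. xs ! (idx ! j) \<notin> acl M (B \<union> set (map ((!) xs) (take j idx)))))"

text \<open>dim X \<le> k, X defined over parameter set B: the largest such d is \<le> k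
(vacuous for the empty set).\<close>
definition dim_le :: "('f, 'r, 'a) struct \<Rightarrow> 'a set \<Rightarrow> 'a list set \<Rightarrow> nat \<Rightarrow> bool" where
  "dim_le M B X k \<longleftrightarrow> (\<forall>d. indep_ge M B X d \<longrightarrow> d \<le> k)"

definition is_curve :: "('f, 'r, 'a) struct \<Rightarrow> 'a set \<Rightarrow> nat \<Rightarrow> 'a list set \<Rightarrow> bool" where
  "is_curve M A n X \<longleftrightarrow> (\<exists>\<phi> e. params n \<phi> e \<subseteq> A \<and> X = defset M n \<phi> e \<and>
      dim_le M (params n \<phi> e) X 1)"

definition cylinder :: "('f, 'r, 'a) struct \<Rightarrow> 'a set \<Rightarrow> nat \<Rightarrow> 'a list set \<Rightarrow> bool" where
  "cylinder M A m Y \<longleftrightarrow> (\<exists>idx C. sorted_wrt (<) idx \<and> (\<forall>i\<in>set idx. i < m) \<and>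
      is_curve M A (length idx) C \<and> Y = {xs. length xs = m \<and> map ((!) xs) idx \<in> C})"

inductive boolcomb :: "'b set \<Rightarrow> 'b set set \<Rightarrow> 'b set \<Rightarrow> bool" for U S where
  gen: "X \<in> S \<Longrightarrow> boolcomb U S X"
| compl: "boolcomb U S X \<Longrightarrow> boolcomb U S (U - X)"
| inter: "boolcomb U S X \<Longrightarrow> boolcomb U S Y \<Longrightarrow> boolcomb U S (X \<inter> Y)"
| union: "boolcomb U S X \<Longrightarrow> boolcomb U S Y \<Longrightarrow> boolcomb U S (X \<union> Y)"

end

theory Submission
  imports Defs
begin

text \<open>Fix a finite set \<open>P \<subseteq> acl(\<emptyset>)\<close> over which all curves \<open>C\<^sub>i\<close> are defined. For a
  point \<open>y\<close> of the last coordinate, the fibre \<open>{a. a @ [y] \<in> C\<^sub>i}\<close> is infinite only for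
  \<open>y\<close> in a finite set \<open>E \<subseteq> acl(\<emptyset>)\<close>: otherwise saturation produces a \<open>y \<notin> acl(P)\<close> with an
  infinite coordinate fibre, hence a point \<open>c\<close> of it not algebraic over \<open>P y\<close>, and by exchange
  the pair \<open>(c, y)\<close> would violate \<open>dim C\<^sub>i \<le> 1\<close>.
  Now \<open>x\<close> has at least \<open>d\<close> common solutions \<open>y\<close> iff, for \<open>F\<close> the set of its solutions
  in \<open>E\<close>, it has at least \<open>d - |F|\<close> solutions outside \<open>E\<close>. Fixing \<open>y \<in> E\<close> makes each
  \<open>x\<^sup>i \<mapsto> C\<^sub>i(x\<^sup>i, y)\<close> an \<open>acl(\<emptyset>)\<close>-definable curve, so "\<open>F\<close> is the trace on \<open>E\<close>" is a
  boolean combination of cylinders. Outside \<open>E\<close> all fibres are finite, so every coordinate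
  of \<open>x\<close> is algebraic over a solution \<open>y\<close>; by exchange the relevant coordinates of such
  \<open>x\<close> form a curve, and "at least \<open>m\<close> solutions outside \<open>E\<close>" is a single cylinder.\<close>

section \<open>Coincidence and substitution for formulas\<close>

lemma evalt_cong: "(\<forall>v\<in>fvt t. e v = e' v) \<Longrightarrow> evalt M e t = evalt M e' t"
proof (induction t)
  case (Fn f ts)
  have "map (evalt M e) ts = map (evalt M e') ts" using Fn by (auto intro!: map_cong)
  then show ?case by (simp only: evalt.simps)
qed simp

lemma sat_cong: "(\<forall>v\<in>fv \<phi>. e v = e' v) \<Longrightarrow> sat M \<phi> e = sat M \<phi> e'"
proof (induction \<phi> arbitrary: e e')
  case (Eq s t)
  then show ?case using evalt_cong[of s e e' M] evalt_cong[of t e e' M] by auto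
next
  case (Rl R ts)
  have "map (evalt M e) ts = map (evalt M e') ts"
    using Rl by (intro map_cong) (auto intro!: evalt_cong)
  then show ?case by (simp only: sat.simps)
next
  case (Conj \<phi>1 \<phi>2)
  have "sat M \<phi>1 e = sat M \<phi>1 e'" by (rule Conj.IH(1)) (use Conj.prems in auto)
  moreover have "sat M \<phi>2 e = sat M \<phi>2 e'" by (rule Conj.IH(2)) (use Conj.prems in auto)
  ultimately show ?case by simp
next
  case (Ex x \<phi>)
  have "sat M \<phi> (e(x := a)) = sat M \<phi> (e'(x := a))" for a
    by (rule Ex.IH) (use Ex.prems in auto)
  then show ?case by simp
qed auto

lemma finite_fvt: "finite (fvt t)"
  by (induction t) auto

lemma finite_fv: "finite (fv \<phi>)"
  by (induction \<phi>) (auto simp: finite_fvt)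

lemma less_Suc_Max_insert: "finite V \<Longrightarrow> v \<in> insert a V \<Longrightarrow> v < Suc (Max (insert a V))"
  by (simp add: le_imp_less_Suc)

primrec rename_trm :: "(nat \<Rightarrow> nat) \<Rightarrow> 'f trm \<Rightarrow> 'f trm" where
  "rename_trm \<sigma> (Var i) = Var (\<sigma> i)"
| "rename_trm \<sigma> (Fn f ts) = Fn f (map (rename_trm \<sigma>) ts)"

primrec rename_fm :: "(nat \<Rightarrow> nat) \<Rightarrow> ('f, 'r) fm \<Rightarrow> ('f, 'r) fm" where
  "rename_fm \<sigma> (Eq s t) = Eq (rename_trm \<sigma> s) (rename_trm \<sigma> t)"
| "rename_fm \<sigma> (Rl R ts) = Rl R (map (rename_trm \<sigma>) ts)"
| "rename_fm \<sigma> (Neg \<phi>) = Neg (rename_fm \<sigma> \<phi>)"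
| "rename_fm \<sigma> (Conj \<phi> \<psi>) = Conj (rename_fm \<sigma> \<phi>) (rename_fm \<sigma> \<psi>)"
| "rename_fm \<sigma> (Ex x \<phi>) = Ex (\<sigma> x) (rename_fm \<sigma> \<phi>)"

lemma evalt_rename_trm: "evalt M e (rename_trm \<sigma> t) = evalt M (e \<circ> \<sigma>) t"
proof (induction t)
  case (Fn f ts)
  have "map (\<lambda>t. evalt M e (rename_trm \<sigma> t)) ts = map (evalt M (e \<circ> \<sigma>)) ts"
    using Fn.IH by (rule map_cong[OF refl])
  then show ?case by (simp only: rename_trm.simps evalt.simps map_map comp_def)
qed simp

lemma fvt_rename_trm: "fvt (rename_trm \<sigma> t) = \<sigma> ` fvt t"
  by (induction t) auto

lemma sat_rename_fm: "inj \<sigma> \<Longrightarrow> sat M (rename_fm \<sigma> \<phi>) e = sat M \<phi> (e \<circ> \<sigma>)"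
proof (induction \<phi> arbitrary: e)
  case (Ex x \<phi>)
  have "(e(\<sigma> x := a)) \<circ> \<sigma> = (e \<circ> \<sigma>)(x := a)" for a
    using Ex.prems by (auto simp: fun_eq_iff inj_eq)
  then show ?case using Ex.IH[OF Ex.prems] by (simp del: comp_apply fun_upd_apply)
qed (auto simp: evalt_rename_trm comp_def)

lemma fv_rename_fm: "inj \<sigma> \<Longrightarrow> fv (rename_fm \<sigma> \<phi>) = \<sigma> ` fv \<phi>"
  by (induction \<phi>) (auto simp: fvt_rename_trm inj_eq image_Un image_set_diff)

text \<open>Renaming \<open>\<psi>\<close> injectively into the fresh block \<open>K + _\<close> and then binding that block by
  equations \<open>x\<^sub>K\<^sub>+\<^sub>v = x\<^sub>\<sigma>\<^sub>v\<close> substitutes an arbitrary, possibly non-injective, \<open>\<sigma>\<close> without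
  variable capture.\<close>

fun bind_copies :: "nat \<Rightarrow> (nat \<Rightarrow> nat) \<Rightarrow> nat list \<Rightarrow> ('f, 'r) fm \<Rightarrow> ('f, 'r) fm" where
  "bind_copies K \<sigma> [] \<psi> = \<psi>"
| "bind_copies K \<sigma> (v # vs) \<psi> =
     Ex (K + v) (Conj (Eq (Var (K + v)) (Var (\<sigma> v))) (bind_copies K \<sigma> vs \<psi>))"

lemma sat_bind_copies:
  assumes "\<forall>v\<in>set vs. \<sigma> v < K"
  shows "sat M (bind_copies K \<sigma> vs \<psi>) e =
     sat M \<psi> (\<lambda>w. if K \<le> w \<and> w - K \<in> set vs then e (\<sigma> (w - K)) else e w)"
  using assms
proof (induction vs arbitrary: e)
  case (Cons v vs)
  let ?e' = "e(K + v := e (\<sigma> v))"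
  have "sat M (bind_copies K \<sigma> (v # vs) \<psi>) e = sat M (bind_copies K \<sigma> vs \<psi>) ?e'"
    using Cons.prems by auto
  also have "\<dots> = sat M \<psi> (\<lambda>w. if K \<le> w \<and> w - K \<in> set vs then ?e' (\<sigma> (w - K)) else ?e' w)"
    using Cons by auto
  also have "(\<lambda>w. if K \<le> w \<and> w - K \<in> set vs then ?e' (\<sigma> (w - K)) else ?e' w)
     = (\<lambda>w. if K \<le> w \<and> w - K \<in> set (v # vs) then e (\<sigma> (w - K)) else e w)"
    using Cons.prems by (auto simp: fun_eq_iff)
  finally show ?case .
qed simp

lemma fv_bind_copies:
  "fv (bind_copies K \<sigma> vs \<psi>) \<subseteq> (fv \<psi> - (\<lambda>v. K + v) ` set vs) \<union> \<sigma> ` set vs"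
  by (induction vs) auto

lemma ex_substituted_fm: "\<exists>\<psi>. fv \<psi> \<subseteq> \<sigma> ` fv \<phi> \<and> (\<forall>e. sat M \<psi> e = sat M \<phi> (e \<circ> \<sigma>))"
proof -
  obtain vs where vs: "set vs = fv \<phi>" using finite_list[OF finite_fv] by blast
  define K where "K = Suc (Max (insert 0 (\<sigma> ` fv \<phi>)))"
  have K: "\<forall>v\<in>set vs. \<sigma> v < K"
    unfolding K_def using vs by (auto intro!: less_Suc_Max_insert simp: finite_fv)
  define sh where "sh = (\<lambda>v::nat. K + v)"
  have inj_sh: "inj sh" by (simp add: sh_def)
  define \<psi> where "\<psi> = bind_copies K \<sigma> vs (rename_fm sh \<phi>)"
  have "fv \<psi> \<subseteq> \<sigma> ` fv \<phi>"
    using fv_bind_copies[of K \<sigma> vs "rename_fm sh \<phi>"] fv_rename_fm[OF inj_sh, of \<phi>] vs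
    unfolding \<psi>_def sh_def by simp
  moreover have "sat M \<psi> e = sat M \<phi> (e \<circ> \<sigma>)" for e
  proof -
    have "sat M \<psi> e =
        sat M \<phi> ((\<lambda>w. if K \<le> w \<and> w - K \<in> set vs then e (\<sigma> (w - K)) else e w) \<circ> sh)"
      unfolding \<psi>_def by (simp only: sat_bind_copies[OF K] sat_rename_fm[OF inj_sh])
    also have "\<dots> = sat M \<phi> (e \<circ> \<sigma>)"
      by (rule sat_cong) (simp add: sh_def vs)
    finally show ?thesis .
  qed
  ultimately show ?thesis by blast
qed

definition fm_true :: "('f, 'r) fm" where
  "fm_true = Ex 0 (Eq (Var 0) (Var 0))"

lemma sat_fm_true [simp]: "sat M fm_true e"
  by (simp add: fm_true_def)

lemma fv_fm_true [simp]: "fv fm_true = {}"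
  by (simp add: fm_true_def)

lemma ex_card_Suc_iff:
  "(\<exists>b. P b \<and> (\<exists>F. finite F \<and> card F = m \<and> (\<forall>a\<in>F. P a \<and> a \<noteq> b))) \<longleftrightarrow>
   (\<exists>F. finite F \<and> card F = Suc m \<and> (\<forall>a\<in>F. P a))"
proof
  assume "\<exists>b. P b \<and> (\<exists>F. finite F \<and> card F = m \<and> (\<forall>a\<in>F. P a \<and> a \<noteq> b))"
  then obtain b F where "P b" "finite F" "card F = m" "\<forall>a\<in>F. P a \<and> a \<noteq> b" by blast
  then show "\<exists>F. finite F \<and> card F = Suc m \<and> (\<forall>a\<in>F. P a)"
    by (intro exI[of _ "insert b F"]) auto
next
  assume "\<exists>F. finite F \<and> card F = Suc m \<and> (\<forall>a\<in>F. P a)"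
  then obtain F where F: "finite F" "card F = Suc m" "\<forall>a\<in>F. P a" by blast
  then obtain b where b: "b \<in> F" by fastforce
  show "\<exists>b. P b \<and> (\<exists>F. finite F \<and> card F = m \<and> (\<forall>a\<in>F. P a \<and> a \<noteq> b))"
    using F b by (intro exI[of _ b] conjI exI[of _ "F - {b}"]) auto
qed

lemma ex_counting_fm:
  "\<exists>\<psi>. fv \<psi> \<subseteq> fv \<phi> - {x} \<and>
     (\<forall>e. sat M \<psi> e = (\<exists>F. finite F \<and> card F = m \<and> (\<forall>a\<in>F. sat M \<phi> (e(x := a)))))"
proof (induction m arbitrary: \<phi>)
  case 0
  show ?case by (rule exI[of _ fm_true]) auto
next
  case (Suc m)
  define z where "z = Suc (Max (insert x (fv \<phi>)))"
  have z: "z \<noteq> x" "z \<notin> fv \<phi>"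
    using less_Suc_Max_insert[OF finite_fv, of _ x \<phi>] unfolding z_def by blast+
  define \<phi>' where "\<phi>' = Conj \<phi> (Neg (Eq (Var x) (Var z)))"
  obtain \<psi>' where \<psi>': "fv \<psi>' \<subseteq> fv \<phi>' - {x}"
    "\<And>e. sat M \<psi>' e = (\<exists>F. finite F \<and> card F = m \<and> (\<forall>a\<in>F. sat M \<phi>' (e(x := a))))"
    using Suc.IH[of \<phi>'] by blast
  obtain \<phi>z where \<phi>z: "fv \<phi>z \<subseteq> (id(x := z)) ` fv \<phi>"
    "\<And>e. sat M \<phi>z e = sat M \<phi> (e \<circ> id(x := z))"
    using ex_substituted_fm by blast
  define \<psi> where "\<psi> = Ex z (Conj \<phi>z \<psi>')"
  have "fv \<psi> \<subseteq> fv \<phi> - {x}"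
    using \<phi>z(1) \<psi>'(1) z by (auto simp: \<psi>_def \<phi>'_def split: if_splits)
  moreover have "sat M \<psi> e = (\<exists>F. finite F \<and> card F = Suc m \<and> (\<forall>a\<in>F. sat M \<phi> (e(x := a))))"
    for e
  proof -
    have drop_z: "sat M \<phi> (e(z := b, x := c)) = sat M \<phi> (e(x := c))" for b c
      by (rule sat_cong) (use z in auto)
    have "e(z := b) \<circ> id(x := z) = e(z := b, x := b)" for b
      using z by (auto simp: fun_eq_iff)
    then have "sat M \<psi> e = (\<exists>b. sat M \<phi> (e(x := b)) \<and>
         (\<exists>F. finite F \<and> card F = m \<and> (\<forall>a\<in>F. sat M \<phi> (e(x := a)) \<and> a \<noteq> b)))"
      using z by (simp add: \<psi>_def \<phi>z(2) \<psi>'(2) drop_z \<phi>'_def)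
    then show ?thesis by (simp only: ex_card_Suc_iff)
  qed
  ultimately show ?case by blast
qed

section \<open>Closure properties of definable sets\<close>

definition assign :: "nat \<Rightarrow> 'a list \<Rightarrow> (nat \<Rightarrow> 'a) \<Rightarrow> nat \<Rightarrow> 'a" where
  "assign n xs e = (\<lambda>i. if i < n then xs ! i else e i)"

lemma defset_assign: "defset M n \<phi> e = {xs. length xs = n \<and> sat M \<phi> (assign n xs e)}"
  by (simp add: defset_def assign_def)

lemma assign_snoc: "length xs = n \<Longrightarrow> (assign n xs e)(n := a) = assign (Suc n) (xs @ [a]) e"
  by (auto simp: fun_eq_iff assign_def nth_append)

lemma definableI:
  assumes "\<And>xs. length xs = n \<Longrightarrow> xs \<in> X \<longleftrightarrow> sat M \<phi> (assign n xs e)"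
    and "\<And>xs. xs \<in> X \<Longrightarrow> length xs = n"
    and "\<And>w. w \<in> fv \<phi> \<Longrightarrow> n \<le> w \<Longrightarrow> e w \<in> B"
  shows "definable M B n X"
proof -
  have "X = defset M n \<phi> e" using assms(1,2) by (auto simp: defset_assign)
  moreover have "params n \<phi> e \<subseteq> B" using assms(3) by (force simp: params_def not_less)
  ultimately show ?thesis unfolding definable_def by blast
qed

lemma definableE:
  assumes "definable M B n X"
  obtains \<phi> e where "\<And>xs. length xs = n \<Longrightarrow> xs \<in> X \<longleftrightarrow> sat M \<phi> (assign n xs e)"
    and "\<And>xs. xs \<in> X \<Longrightarrow> length xs = n"
    and "\<And>w. w \<in> fv \<phi> \<Longrightarrow> n \<le> w \<Longrightarrow> e w \<in> B"
proof -
  from assms obtain \<phi> e where "params n \<phi> e \<subseteq> B" "X = defset M n \<phi> e"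
    unfolding definable_def by blast
  then show ?thesis by (intro that[of \<phi> e]) (auto simp: defset_assign params_def)
qed

lemma definable_length: "definable M B n X \<Longrightarrow> xs \<in> X \<Longrightarrow> length xs = n"
  by (rule definableE) blast+

lemma definable_mono: "definable M B n X \<Longrightarrow> B \<subseteq> B' \<Longrightarrow> definable M B' n X"
  unfolding definable_def by blast

lemma definable_lists: "definable M B n {xs. length xs = n}"
  by (rule definableI[where \<phi> = fm_true and e = undefined]) auto

lemma definable_Diff_lists:
  "definable M B n X \<Longrightarrow> definable M B n ({xs. length xs = n} - X)"
proof (erule definableE)
  fix \<phi> e assume "\<And>xs. length xs = n \<Longrightarrow> xs \<in> X \<longleftrightarrow> sat M \<phi> (assign n xs e)"
    "\<And>w. w \<in> fv \<phi> \<Longrightarrow> n \<le> w \<Longrightarrow> e w \<in> B"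
  then show ?thesis by (intro definableI[where \<phi> = "Neg \<phi>" and e = e]) auto
qed

lemma definable_empty: "definable M B n {}"
  using definable_Diff_lists[OF definable_lists[of M B n]] by simp

text \<open>The conjunction of the two defining formulas only works after moving the parameters
  of the second formula past all variables of the first one.\<close>

lemma definable_Int:
  fixes M :: "('f, 'r, 'a) struct"
  assumes "definable M B n X" "definable M B n Y"
  shows "definable M B n (X \<inter> Y)"
proof -
  obtain \<phi>1 e1 where h1: "\<And>xs. length xs = n \<Longrightarrow> xs \<in> X \<longleftrightarrow> sat M \<phi>1 (assign n xs e1)"
    "\<And>xs. xs \<in> X \<Longrightarrow> length xs = n" "\<And>w. w \<in> fv \<phi>1 \<Longrightarrow> n \<le> w \<Longrightarrow> e1 w \<in> B"
    by (rule definableE[OF assms(1)]) blast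
  obtain \<phi>2 e2 where h2: "\<And>xs. length xs = n \<Longrightarrow> xs \<in> Y \<longleftrightarrow> sat M \<phi>2 (assign n xs e2)"
    "\<And>w. w \<in> fv \<phi>2 \<Longrightarrow> n \<le> w \<Longrightarrow> e2 w \<in> B"
    by (rule definableE[OF assms(2)]) blast
  define K where "K = Suc (Max (insert n (fv \<phi>1)))"
  have K: "v < K" if "v \<in> insert n (fv \<phi>1)" for v
    using less_Suc_Max_insert[OF finite_fv that] by (simp add: K_def)
  define \<sigma> where "\<sigma> = (\<lambda>v. if v < n then v else K + v)"
  obtain \<psi> where \<psi>: "fv \<psi> \<subseteq> \<sigma> ` fv \<phi>2" "\<And>e. sat M \<psi> e = sat M \<phi>2 (e \<circ> \<sigma>)"
    using ex_substituted_fm by blast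
  define e where "e = (\<lambda>v. if v < K then e1 v else e2 (v - K))"
  show ?thesis
  proof (rule definableI[where \<phi> = "Conj \<phi>1 \<psi>" and e = e])
    fix xs :: "'a list" assume len: "length xs = n"
    have "assign n xs e \<circ> \<sigma> = assign n xs e2"
      using K[of n] by (auto simp: fun_eq_iff assign_def \<sigma>_def e_def)
    moreover have "sat M \<phi>1 (assign n xs e) = sat M \<phi>1 (assign n xs e1)"
      by (rule sat_cong) (auto simp: assign_def e_def dest: K[OF insertI2])
    ultimately show "xs \<in> X \<inter> Y \<longleftrightarrow> sat M (Conj \<phi>1 \<psi>) (assign n xs e)"
      using h1(1)[OF len] h2(1)[OF len] \<psi>(2) by simp
  next
    fix w assume w: "w \<in> fv (Conj \<phi>1 \<psi>)" "n \<le> w"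
    show "e w \<in> B"
    proof (cases "w \<in> fv \<phi>1")
      case True
      then show ?thesis using K h1(3) w(2) by (simp add: e_def)
    next
      case False
      then obtain v where v: "v \<in> fv \<phi>2" "w = \<sigma> v" using \<psi>(1) w(1) by auto
      then have "\<not> v < n" "w = K + v" using w(2) False by (auto simp: \<sigma>_def split: if_splits)
      then show ?thesis using h2(2)[OF v(1)] by (simp add: e_def)
    qed
  qed (use h1(2) in blast)
qed

lemma definable_Un:
  assumes "definable M B n X" "definable M B n Y"
  shows "definable M B n (X \<union> Y)"
proof -
  have "X \<union> Y = {xs. length xs = n} - (({xs. length xs = n} - X) \<inter> ({xs. length xs = n} - Y))"
    using definable_length[OF assms(1)] definable_length[OF assms(2)] by blast
  then show ?thesis using assms by (simp add: definable_Diff_lists definable_Int)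
qed

lemma definable_INT:
  assumes "finite I" "\<forall>i\<in>I. definable M B n (X i)"
  shows "definable M B n ({xs. length xs = n} \<inter> \<Inter> (X ` I))"
  using assms
proof (induction I rule: finite_induct)
  case (insert i I)
  have "{xs. length xs = n} \<inter> \<Inter> (X ` insert i I) = X i \<inter> ({xs. length xs = n} \<inter> \<Inter> (X ` I))"
    by auto
  then show ?case using insert by (simp add: definable_Int)
qed (simp add: definable_lists)

lemma definable_UN:
  assumes "finite I" "\<forall>i\<in>I. definable M B n (X i)"
  shows "definable M B n (\<Union> (X ` I))"
  using assms by (induction I rule: finite_induct) (simp_all add: definable_empty definable_Un)

lemma definable_nth_eq_param:
  assumes "i < n" "b \<in> B"
  shows "definable M B n {xs. length xs = n \<and> xs ! i = b}"
  by (rule definableI[where \<phi> = "Eq (Var i) (Var n)" and e = "\<lambda>_. b"])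
     (use assms in \<open>auto simp: assign_def\<close>)

lemma definable_nth_eq_nth:
  assumes "i < n" "j < n"
  shows "definable M B n {xs. length xs = n \<and> xs ! i = xs ! j}"
  by (rule definableI[where \<phi> = "Eq (Var i) (Var j)" and e = undefined])
     (use assms in \<open>auto simp: assign_def\<close>)

lemma definable_count_extensions:
  fixes M :: "('f, 'r, 'a) struct"
  assumes "definable M B (Suc n) X"
  shows "definable M B n
    {xs. length xs = n \<and> (\<exists>F. finite F \<and> card F = m \<and> (\<forall>y\<in>F. xs @ [y] \<in> X))}"
proof -
  obtain \<phi> e where h: "\<And>xs. length xs = Suc n \<Longrightarrow> xs \<in> X \<longleftrightarrow> sat M \<phi> (assign (Suc n) xs e)"
    "\<And>w. w \<in> fv \<phi> \<Longrightarrow> Suc n \<le> w \<Longrightarrow> e w \<in> B"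
    by (rule definableE[OF assms]) blast
  obtain \<psi> where \<psi>: "fv \<psi> \<subseteq> fv \<phi> - {n}"
    "\<And>e. sat M \<psi> e = (\<exists>F. finite F \<and> card F = m \<and> (\<forall>a\<in>F. sat M \<phi> (e(n := a))))"
    using ex_counting_fm[of \<phi> n M m] by blast
  show ?thesis
  proof (rule definableI[where \<phi> = \<psi> and e = e])
    fix xs :: "'a list" assume len: "length xs = n"
    have extend: "sat M \<phi> ((assign n xs e)(n := a)) = (xs @ [a] \<in> X)" for a
      using h(1)[of "xs @ [a]"] len by (simp add: assign_snoc)
    show "xs \<in> {xs. length xs = n \<and> (\<exists>F. finite F \<and> card F = m \<and> (\<forall>y\<in>F. xs @ [y] \<in> X))}
        \<longleftrightarrow> sat M \<psi> (assign n xs e)"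
      using len by (simp only: \<psi>(2) extend mem_Collect_eq simp_thms)
  next
    fix w assume w: "w \<in> fv \<psi>" "n \<le> w"
    then have "w \<in> fv \<phi>" "w \<noteq> n" using \<psi>(1) by auto
    then show "e w \<in> B" using h(2) w(2) by simp
  qed auto
qed

lemma definable_proj_last:
  assumes "definable M B (Suc n) X"
  shows "definable M B n {xs. length xs = n \<and> (\<exists>y. xs @ [y] \<in> X)}"
proof -
  have "{xs. length xs = n \<and> (\<exists>y. xs @ [y] \<in> X)} =
        {xs. length xs = n \<and> (\<exists>F. finite F \<and> card F = 1 \<and> (\<forall>y\<in>F. xs @ [y] \<in> X))}"
    by (auto simp: card_Suc_eq)
  then show ?thesis using definable_count_extensions[OF assms, of 1] by simp
qed

lemma definable_proj_append:
  "definable M B (m + k) X \<Longrightarrow>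
   definable M B m {xs. length xs = m \<and> (\<exists>zs. length zs = k \<and> xs @ zs \<in> X)}"
proof (induction k arbitrary: X)
  case 0
  have "{xs. length xs = m \<and> (\<exists>zs. length zs = 0 \<and> xs @ zs \<in> X)} = X"
    using definable_length[OF 0[simplified]] by auto
  then show ?case using 0 by simp
next
  case (Suc k)
  define X' where "X' = {xs. length xs = m + k \<and> (\<exists>y. xs @ [y] \<in> X)}"
  have "definable M B (m + k) X'"
    unfolding X'_def by (rule definable_proj_last) (use Suc.prems in simp)
  then have "definable M B m {xs. length xs = m \<and> (\<exists>zs. length zs = k \<and> xs @ zs \<in> X')}"
    by (rule Suc.IH)
  moreover have "(\<exists>zs. length zs = k \<and> xs @ zs \<in> X') \<longleftrightarrow> (\<exists>zs. length zs = Suc k \<and> xs @ zs \<in> X)"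
    if "length xs = m" for xs
  proof
    assume "\<exists>zs. length zs = k \<and> xs @ zs \<in> X'"
    then obtain zs y where "length zs = k" "(xs @ zs) @ [y] \<in> X" by (auto simp: X'_def)
    then show "\<exists>zs. length zs = Suc k \<and> xs @ zs \<in> X" by (intro exI[of _ "zs @ [y]"]) auto
  next
    assume "\<exists>zs. length zs = Suc k \<and> xs @ zs \<in> X"
    then obtain zs where zs: "length zs = Suc k" "xs @ zs \<in> X" by blast
    then obtain zs' y where "zs = zs' @ [y]" by (metis length_Suc_conv_rev)
    then have "length zs' = k" "xs @ zs' @ [y] \<in> X" using zs by auto
    then obtain zs y where "length zs = k" "xs @ zs @ [y] \<in> X" by blast
    then show "\<exists>zs. length zs = k \<and> xs @ zs \<in> X'" using that by (auto simp: X'_def)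
  qed
  then have "{xs. length xs = m \<and> (\<exists>zs. length zs = k \<and> xs @ zs \<in> X')} =
      {xs. length xs = m \<and> (\<exists>zs. length zs = Suc k \<and> xs @ zs \<in> X)}"
    by blast
  ultimately show ?case by simp
qed

lemma definable_vimage_coords:
  fixes M :: "('f, 'r, 'a) struct"
  assumes "definable M B k X" "length ix = k" "\<forall>i\<in>set ix. i < n"
  shows "definable M B n {xs. length xs = n \<and> map ((!) xs) ix \<in> X}"
proof -
  obtain \<phi> e where h: "\<And>xs. length xs = k \<Longrightarrow> xs \<in> X \<longleftrightarrow> sat M \<phi> (assign k xs e)"
    "\<And>w. w \<in> fv \<phi> \<Longrightarrow> k \<le> w \<Longrightarrow> e w \<in> B"
    by (rule definableE[OF assms(1)]) blast
  define \<sigma> where "\<sigma> = (\<lambda>v. if v < k then ix ! v else n + v)"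
  obtain \<psi> where \<psi>: "fv \<psi> \<subseteq> \<sigma> ` fv \<phi>" "\<And>e. sat M \<psi> e = sat M \<phi> (e \<circ> \<sigma>)"
    using ex_substituted_fm by blast
  define e' where "e' = (\<lambda>w. e (w - n))"
  have ix: "v < k \<Longrightarrow> ix ! v < n" for v using assms(2,3) by auto
  show ?thesis
  proof (rule definableI[where \<phi> = \<psi> and e = e'])
    fix xs :: "'a list" assume len: "length xs = n"
    have "assign n xs e' \<circ> \<sigma> = assign k (map ((!) xs) ix) e"
      using ix assms(2) by (auto simp: fun_eq_iff assign_def \<sigma>_def e'_def)
    then show "xs \<in> {xs. length xs = n \<and> map ((!) xs) ix \<in> X} \<longleftrightarrow> sat M \<psi> (assign n xs e')"
      using len assms(2) by (simp add: \<psi>(2) h(1))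
  next
    fix w assume w: "w \<in> fv \<psi>" "n \<le> w"
    then obtain v where v: "v \<in> fv \<phi>" "w = \<sigma> v" using \<psi>(1) by blast
    have "\<not> v < k"
    proof
      assume "v < k"
      then show False using ix[of v] v(2) w(2) by (simp add: \<sigma>_def)
    qed
    then show "e' w \<in> B" using v h(2) by (simp add: \<sigma>_def e'_def)
  qed auto
qed

lemma definable_fix_last:
  fixes M :: "('f, 'r, 'a) struct"
  assumes "definable M B (Suc n) X" "b \<in> B"
  shows "definable M B n {xs. length xs = n \<and> xs @ [b] \<in> X}"
proof -
  obtain \<phi> e where h: "\<And>xs. length xs = Suc n \<Longrightarrow> xs \<in> X \<longleftrightarrow> sat M \<phi> (assign (Suc n) xs e)"
    "\<And>w. w \<in> fv \<phi> \<Longrightarrow> Suc n \<le> w \<Longrightarrow> e w \<in> B"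
    by (rule definableE[OF assms(1)]) blast
  define K where "K = Suc (Max (insert n (fv \<phi>)))"
  have K: "v < K" if "v \<in> insert n (fv \<phi>)" for v
    using less_Suc_Max_insert[OF finite_fv that] by (simp add: K_def)
  define \<sigma> where "\<sigma> = (\<lambda>v. if v = n then K else v)"
  obtain \<psi> where \<psi>: "fv \<psi> \<subseteq> \<sigma> ` fv \<phi>" "\<And>e. sat M \<psi> e = sat M \<phi> (e \<circ> \<sigma>)"
    using ex_substituted_fm by blast
  define e' where "e' = e(K := b)"
  show ?thesis
  proof (rule definableI[where \<phi> = \<psi> and e = e'])
    fix xs :: "'a list" assume len: "length xs = n"
    have "sat M \<phi> (assign n xs e' \<circ> \<sigma>) = sat M \<phi> (assign (Suc n) (xs @ [b]) e)"
      by (rule sat_cong) (use len K[OF insertI1] K[OF insertI2] in \<open>auto simp: assign_def \<sigma>_def e'_def nth_append\<close>)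
    then show "xs \<in> {xs. length xs = n \<and> xs @ [b] \<in> X} \<longleftrightarrow> sat M \<psi> (assign n xs e')"
      using len by (simp add: \<psi>(2) h(1))
  next
    fix w assume w: "w \<in> fv \<psi>" "n \<le> w"
    then obtain v where v: "v \<in> fv \<phi>" "w = \<sigma> v" using \<psi>(1) by blast
    show "e' w \<in> B"
    proof (cases "v = n")
      case False
      then have "w = v" "v < K" using v K by (auto simp: \<sigma>_def)
      then show ?thesis using False w(2) h(2)[OF v(1)] by (simp add: e'_def)
    qed (use v assms(2) in \<open>simp add: \<sigma>_def e'_def\<close>)
  qed auto
qed

lemma definable_abstract_param:
  fixes M :: "('f, 'r, 'a) struct"
  assumes "definable M (insert b B) n Y"
  obtains Z where "definable M B (Suc n) Z" "Y = {xs. length xs = n \<and> xs @ [b] \<in> Z}"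
proof -
  obtain \<phi> e where h: "\<And>xs. length xs = n \<Longrightarrow> xs \<in> Y \<longleftrightarrow> sat M \<phi> (assign n xs e)"
    "\<And>xs. xs \<in> Y \<Longrightarrow> length xs = n" "\<And>w. w \<in> fv \<phi> \<Longrightarrow> n \<le> w \<Longrightarrow> e w \<in> insert b B"
    by (rule definableE[OF assms]) blast
  define \<sigma> where "\<sigma> = (\<lambda>v. if v < n then v else if e v = b then n else Suc n + v)"
  obtain \<psi> where \<psi>: "fv \<psi> \<subseteq> \<sigma> ` fv \<phi>" "\<And>e. sat M \<psi> e = sat M \<phi> (e \<circ> \<sigma>)"
    using ex_substituted_fm by blast
  define e' where "e' = (\<lambda>w. e (w - Suc n))"
  define Z where "Z = {zs. length zs = Suc n \<and> sat M \<psi> (assign (Suc n) zs e')}"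
  have "definable M B (Suc n) Z"
  proof (rule definableI[where \<phi> = \<psi> and e = e'])
    fix w assume w: "w \<in> fv \<psi>" "Suc n \<le> w"
    then obtain v where v: "v \<in> fv \<phi>" "w = \<sigma> v" using \<psi>(1) by blast
    have "\<not> v < n"
    proof
      assume "v < n"
      then show False using v(2) w(2) by (simp add: \<sigma>_def)
    qed
    moreover have "e v \<noteq> b"
    proof
      assume "e v = b"
      then show False using v(2) w(2) \<open>\<not> v < n\<close> by (simp add: \<sigma>_def)
    qed
    ultimately have "\<not> v < n" "e v \<noteq> b" "w = Suc n + v" using v(2) by (simp_all add: \<sigma>_def)
    then show "e' w \<in> B" using h(3)[OF v(1)] by (simp add: e'_def)
  qed (auto simp: Z_def)
  moreover have "Y = {xs. length xs = n \<and> xs @ [b] \<in> Z}"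
  proof -
    have "assign (Suc n) (xs @ [b]) e' \<circ> \<sigma> = assign n xs e" if "length xs = n" for xs
      using that by (auto simp: fun_eq_iff assign_def \<sigma>_def e'_def nth_append)
    then have "xs \<in> Y \<longleftrightarrow> length xs = n \<and> xs @ [b] \<in> Z" for xs
      using h(1)[of xs] h(2)[of xs] by (auto simp: Z_def \<psi>(2))
    then show ?thesis by blast
  qed
  ultimately show ?thesis by (rule that)
qed

section \<open>Algebraic closure\<close>

abbreviation singletons :: "'a set \<Rightarrow> 'a list set" where
  "singletons T \<equiv> (\<lambda>b. [b]) ` T"

lemma singleton_in_singletons_iff [simp]: "[x] \<in> singletons T \<longleftrightarrow> x \<in> T"
  by auto

definition definable_unary :: "('f, 'r, 'a) struct \<Rightarrow> 'a set \<Rightarrow> 'a set \<Rightarrow> bool" where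
  "definable_unary M B T \<longleftrightarrow> definable M B 1 (singletons T)"

lemma length_Suc_0_conv: "length xs = Suc 0 \<longleftrightarrow> (\<exists>x. xs = [x])"
  by (auto simp: length_Suc_conv)

lemma assign_singleton: "assign (Suc 0) [b] e = e(0 := b)"
  by (auto simp: fun_eq_iff assign_def)

lemma definable_unaryI:
  assumes "definable M B (Suc 0) S"
  shows "definable_unary M B {b. [b] \<in> S}"
proof -
  have "singletons {b. [b] \<in> S} = S"
    using definable_length[OF assms] by (auto simp: length_Suc_0_conv)
  then show ?thesis unfolding definable_unary_def One_nat_def using assms by simp
qed

lemma definable_unaryD: "definable_unary M B T \<Longrightarrow> definable M B (Suc 0) (singletons T)"
  unfolding definable_unary_def One_nat_def .

lemma acl_iff_definable_finite: "a \<in> acl M B \<longleftrightarrow> (\<exists>T. definable_unary M B T \<and> finite T \<and> a \<in> T)"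
proof
  assume "a \<in> acl M B"
  then obtain \<phi> e where h: "params 1 \<phi> e \<subseteq> B" "finite {b. sat M \<phi> (e(0 := b))}"
    "sat M \<phi> (e(0 := a))"
    unfolding acl_def by blast
  define T where "T = {b. sat M \<phi> (e(0 := b))}"
  have "singletons T = defset M 1 \<phi> e"
    by (auto simp: T_def defset_assign assign_singleton length_Suc_0_conv)
  then have "definable_unary M B T" using h(1) unfolding definable_unary_def definable_def by blast
  then show "\<exists>T. definable_unary M B T \<and> finite T \<and> a \<in> T" using h(2,3) by (auto simp: T_def)
next
  assume "\<exists>T. definable_unary M B T \<and> finite T \<and> a \<in> T"
  then obtain T \<phi> e where T: "finite T" "a \<in> T" and h: "params 1 \<phi> e \<subseteq> B"
    "singletons T = defset M 1 \<phi> e"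
    unfolding definable_unary_def definable_def by blast
  have "sat M \<phi> (e(0 := b)) \<longleftrightarrow> [b] \<in> singletons T" for b
    by (simp add: h(2) defset_assign assign_singleton)
  then have "{b. sat M \<phi> (e(0 := b))} = T" by auto
  then show "a \<in> acl M B" unfolding acl_def using h(1) T by auto
qed

lemma acl_mono: "B \<subseteq> B' \<Longrightarrow> acl M B \<subseteq> acl M B'"
  unfolding definable_unary_def subset_iff acl_iff_definable_finite by (blast intro: definable_mono)

lemma definable_unary_small_fibres:
  fixes M :: "('f, 'r, 'a) struct"
  assumes Z: "definable M X (Suc (Suc 0)) Z" and T: "definable_unary M X T"
  shows "definable_unary M X
    {x. \<exists>u\<in>T. [x, u] \<in> Z \<and> \<not> (\<exists>F. finite F \<and> card F = Suc N \<and> (\<forall>y\<in>F. [y, u] \<in> Z))}"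
proof -
  define Big where "Big = {xs. length xs = Suc 0 \<and> (\<exists>F. finite F \<and> card F = Suc N \<and>
    (\<forall>y\<in>F. xs @ [y] \<in> {zs. length zs = Suc (Suc 0) \<and> map ((!) zs) [1, 0] \<in> Z}))}"
  have "definable M X (Suc 0) Big"
    unfolding Big_def by (intro definable_count_extensions definable_vimage_coords[OF Z]) auto
  then have small: "definable M X (Suc 0) ({xs. length xs = Suc 0} - Big)"
    by (rule definable_Diff_lists)
  define W where "W = Z
    \<inter> {xs. length xs = Suc (Suc 0) \<and> map ((!) xs) [1] \<in> {xs. length xs = Suc 0} - Big}
    \<inter> {xs. length xs = Suc (Suc 0) \<and> map ((!) xs) [1] \<in> singletons T}"
  have "definable M X (Suc (Suc 0)) W"
    unfolding W_def using Z definable_unaryD[OF T] small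
    by (intro definable_Int definable_vimage_coords) auto
  then have "definable M X (Suc 0) {xs. length xs = Suc 0 \<and> (\<exists>y. xs @ [y] \<in> W)}"
    by (rule definable_proj_last)
  moreover have "{xs. length xs = Suc 0 \<and> (\<exists>y. xs @ [y] \<in> W)} = singletons
      {x. \<exists>u\<in>T. [x, u] \<in> Z \<and> \<not> (\<exists>F. finite F \<and> card F = Suc N \<and> (\<forall>y\<in>F. [y, u] \<in> Z))}"
    by (auto simp: W_def Big_def length_Suc_0_conv)
  ultimately show ?thesis by (simp add: definable_unary_def)
qed

text \<open>If \<open>a\<close> lies in the finite set \<open>T\<^sub>1 = {x. [x, b] \<in> Z}\<close> and \<open>b\<close> in the finite
  \<open>X\<close>-definable set \<open>T\<^sub>2\<close>, then \<open>a\<close> lies in the set of those \<open>x\<close> with \<open>[x, u] \<in> Z\<close> for some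
  \<open>u \<in> T\<^sub>2\<close> whose \<open>Z\<close>-fibre has at most \<open>card T\<^sub>1\<close> elements, which is finite and
  \<open>X\<close>-definable.\<close>

lemma acl_trans:
  fixes M :: "('f, 'r, 'a) struct"
  assumes a: "a \<in> acl M (insert b X)" and b: "b \<in> acl M X"
  shows "a \<in> acl M X"
proof -
  obtain T1 where T1: "definable_unary M (insert b X) T1" "finite T1" "a \<in> T1"
    using a unfolding acl_iff_definable_finite by blast
  obtain T2 where T2: "definable_unary M X T2" "finite T2" "b \<in> T2"
    using b unfolding acl_iff_definable_finite by blast
  obtain Z where Z: "definable M X (Suc (Suc 0)) Z"
    "singletons T1 = {xs. length xs = Suc 0 \<and> xs @ [b] \<in> Z}"
    using definable_abstract_param[OF definable_unaryD[OF T1(1)]] by blast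
  have T1Z: "x \<in> T1 \<longleftrightarrow> [x, b] \<in> Z" for x
    using Z(2) singleton_in_singletons_iff[of x T1] by simp
  define big where "big u \<longleftrightarrow> (\<exists>F. finite F \<and> card F = Suc (card T1) \<and> (\<forall>y\<in>F. [y, u] \<in> Z))"
    for u
  define R where "R = {x. \<exists>u\<in>T2. [x, u] \<in> Z \<and> \<not> big u}"
  have "definable_unary M X R"
    unfolding R_def big_def by (rule definable_unary_small_fibres[OF Z(1) T2(1)])
  moreover have "a \<in> R"
  proof -
    have "card F \<le> card T1" if "\<forall>y\<in>F. [y, b] \<in> Z" for F
      using T1(2) that T1Z by (intro card_mono) auto
    then have "\<not> big b" by (force simp: big_def)
    then show ?thesis using T1(3) T2(3) T1Z by (auto simp: R_def)
  qed
  moreover have "finite R"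
  proof -
    have "finite {x. [x, u] \<in> Z}" if "\<not> big u" for u
      using that infinite_arbitrarily_large[of "{x. [x, u] \<in> Z}" "Suc (card T1)"]
      by (auto simp: big_def)
    then have "finite (\<Union>u\<in>T2 - {u. big u}. {x. [x, u] \<in> Z})" using T2(2) by blast
    moreover have "R \<subseteq> (\<Union>u\<in>T2 - {u. big u}. {x. [x, u] \<in> Z})" by (auto simp: R_def)
    ultimately show ?thesis by (rule finite_subset[rotated])
  qed
  ultimately show ?thesis unfolding acl_iff_definable_finite by blast
qed

lemma acl_trans_finite:
  fixes M :: "('f, 'r, 'a) struct"
  assumes "finite Z" "Z \<subseteq> acl M X" "a \<in> acl M (X \<union> Z)"
  shows "a \<in> acl M X"
  using assms
proof (induction Z arbitrary: a rule: finite_induct)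
  case (insert z Z)
  have "a \<in> acl M (insert z (X \<union> Z))" using insert.prems by simp
  moreover have "z \<in> acl M (X \<union> Z)" using insert.prems acl_mono[of X "X \<union> Z" M] by blast
  ultimately have "a \<in> acl M (X \<union> Z)" by (rule acl_trans)
  then show ?case using insert.IH insert.prems by blast
qed simp

section \<open>Saturation\<close>

text \<open>Saturation concerns formulas over one fixed environment with finite range; every
  definable subset of \<open>M\<close> with parameters among \<open>bs\<close> is defined by some formula over the
  environment \<open>list_env bs d\<^sub>0\<close>, which places \<open>bs\<close> at the variables \<open>1, \<dots>, length bs\<close>.\<close>

definition list_env :: "'a list \<Rightarrow> 'a \<Rightarrow> nat \<Rightarrow> 'a" where
  "list_env bs d0 = (\<lambda>v. if 0 < v \<and> v \<le> length bs then bs ! (v - 1) else d0)"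

lemma finite_range_list_env: "finite (range (list_env bs d0))"
proof -
  have "range (list_env bs d0) \<subseteq> insert d0 (set bs)" by (auto simp: list_env_def)
  then show ?thesis by (rule finite_subset) simp
qed

lemma definable_unary_list_env:
  fixes M :: "('f, 'r, 'a) struct"
  assumes "definable_unary M B T" "B \<subseteq> set bs"
  obtains \<phi> where "\<And>b. sat M \<phi> ((list_env bs d0)(0 := b)) \<longleftrightarrow> b \<in> T"
proof -
  obtain \<phi>0 e0 where
    h: "\<And>xs. length xs = Suc 0 \<Longrightarrow> xs \<in> singletons T \<longleftrightarrow> sat M \<phi>0 (assign (Suc 0) xs e0)"
    "\<And>w. w \<in> fv \<phi>0 \<Longrightarrow> Suc 0 \<le> w \<Longrightarrow> e0 w \<in> B"
    by (rule definableE[OF definable_unaryD[OF assms(1)]]) blast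
  have "\<forall>v\<in>fv \<phi>0 - {0}. \<exists>j. j < length bs \<and> bs ! j = e0 v"
    using h(2) assms(2) by (force simp: in_set_conv_nth Suc_le_eq)
  then obtain ix where ix: "\<And>v. v \<in> fv \<phi>0 - {0} \<Longrightarrow> ix v < length bs \<and> bs ! ix v = e0 v"
    by metis
  define \<sigma> where "\<sigma> = (\<lambda>v. if v = 0 then 0 else Suc (ix v))"
  obtain \<psi> where \<psi>: "\<And>e. sat M \<psi> e = sat M \<phi>0 (e \<circ> \<sigma>)"
    using ex_substituted_fm by blast
  have "sat M \<psi> ((list_env bs d0)(0 := b)) = sat M \<phi>0 (assign (Suc 0) [b] e0)" for b
    unfolding \<psi>
  proof (rule sat_cong, intro ballI)
    fix v assume "v \<in> fv \<phi>0"
    then show "((list_env bs d0)(0 := b) \<circ> \<sigma>) v = assign (Suc 0) [b] e0 v"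
      using ix[of v] by (cases "v = 0") (auto simp: \<sigma>_def assign_def list_env_def)
  qed
  then show ?thesis using h(1)[of "[_]"] by (intro that[of \<psi>]) simp
qed

text \<open>The negations of all algebraic formulas are added to the type, which remains finitely
  satisfiable because each of them excludes only finitely many elements.\<close>

lemma omega_saturated_nonalgebraic_fm:
  fixes M :: "('f, 'r, 'a) struct" and \<Phi> :: "('f, 'r) fm set"
  assumes sat: "omega_saturated M" and E: "finite (range E)"
    and fip: "\<And>\<Phi>0 F. \<Phi>0 \<subseteq> \<Phi> \<Longrightarrow> finite \<Phi>0 \<Longrightarrow> finite F \<Longrightarrow>
      \<exists>b. b \<notin> F \<and> (\<forall>\<phi>\<in>\<Phi>0. sat M \<phi> (E(0 := b)))"
  obtains b where "\<forall>\<phi>\<in>\<Phi>. sat M \<phi> (E(0 := b))"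
    "\<And>\<psi>. finite {b. sat M \<psi> (E(0 := b))} \<Longrightarrow> \<not> sat M \<psi> (E(0 := b))"
proof -
  define \<Sigma> :: "('f, 'r) fm set" where "\<Sigma> = {Neg \<psi> | \<psi>. finite {b. sat M \<psi> (E(0 := b))}}"
  have "\<exists>b. \<forall>\<phi>\<in>\<Phi> \<union> \<Sigma>. sat M \<phi> (E(0 := b))"
  proof (rule sat[unfolded omega_saturated_def, rule_format, OF E])
    fix \<Sigma>0 assume \<Sigma>0: "\<Sigma>0 \<subseteq> \<Phi> \<union> \<Sigma>" "finite \<Sigma>0"
    define F where
      "F = (\<Union>\<psi>\<in>{\<psi>. Neg \<psi> \<in> \<Sigma>0 \<and> finite {b. sat M \<psi> (E(0 := b))}}. {b. sat M \<psi> (E(0 := b))})"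
    have "finite (Neg -` \<Sigma>0)" using \<Sigma>0(2) by (rule finite_vimageI) (simp add: inj_def)
    then have "finite F" unfolding F_def by (auto intro: finite_subset)
    then obtain b where b: "b \<notin> F" "\<forall>\<phi>\<in>\<Sigma>0 \<inter> \<Phi>. sat M \<phi> (E(0 := b))"
      using fip[of "\<Sigma>0 \<inter> \<Phi>"] \<Sigma>0(2) by blast
    have "sat M \<phi> (E(0 := b))" if \<phi>: "\<phi> \<in> \<Sigma>0" for \<phi>
    proof (cases "\<phi> \<in> \<Phi>")
      case False
      then obtain \<psi> where "\<phi> = Neg \<psi>" "finite {b. sat M \<psi> (E(0 := b))}"
        using \<phi> \<Sigma>0(1) unfolding \<Sigma>_def by blast
      then show ?thesis using b(1) \<phi> unfolding F_def by auto
    qed (use b(2) \<phi> in blast)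
    then show "\<exists>b. \<forall>\<phi>\<in>\<Sigma>0. sat M \<phi> (E(0 := b))" by blast
  qed
  then obtain b where b: "\<forall>\<phi>\<in>\<Phi> \<union> \<Sigma>. sat M \<phi> (E(0 := b))" by blast
  show ?thesis
  proof (rule that)
    show "\<forall>\<phi>\<in>\<Phi>. sat M \<phi> (E(0 := b))" using b by blast
    show "\<not> sat M \<psi> (E(0 := b))" if "finite {b. sat M \<psi> (E(0 := b))}" for \<psi>
    proof -
      have "Neg \<psi> \<in> \<Sigma>" using that by (auto simp: \<Sigma>_def)
      then have "sat M (Neg \<psi>) (E(0 := b))" using b by blast
      then show ?thesis by simp
    qed
  qed
qed

lemma omega_saturated_nonalgebraic:
  fixes M :: "('f, 'r, 'a) struct" and T :: "'i \<Rightarrow> 'a set"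
  assumes sat: "omega_saturated M" and "finite B"
    and defs: "\<forall>i\<in>I. definable_unary M B (T i)"
    and fip: "\<And>I0 F. I0 \<subseteq> I \<Longrightarrow> finite I0 \<Longrightarrow> finite F \<Longrightarrow> \<exists>b. b \<notin> F \<and> (\<forall>i\<in>I0. b \<in> T i)"
  obtains b where "\<forall>i\<in>I. b \<in> T i" "b \<notin> acl M B"
proof -
  obtain bs where bs: "set bs = B" using finite_list[OF \<open>finite B\<close>] by blast
  define E where "E = list_env bs (undefined :: 'a)"
  have defining_fm: "\<exists>\<phi>. \<forall>b. sat M \<phi> (E(0 := b)) \<longleftrightarrow> b \<in> T'" if "definable_unary M B T'" for T'
    using definable_unary_list_env[OF that, of bs undefined] bs unfolding E_def by auto
  define \<Phi> where "\<Phi> = {\<phi>. \<exists>i\<in>I. \<forall>b. sat M \<phi> (E(0 := b)) \<longleftrightarrow> b \<in> T i}"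
  obtain b where b: "\<forall>\<phi>\<in>\<Phi>. sat M \<phi> (E(0 := b))"
    "\<And>\<psi>. finite {b. sat M \<psi> (E(0 := b))} \<Longrightarrow> \<not> sat M \<psi> (E(0 := b))"
  proof (rule omega_saturated_nonalgebraic_fm[OF sat])
    show "finite (range E)" by (simp add: E_def finite_range_list_env)
    fix \<Phi>0 and F :: "'a set" assume \<Phi>0: "\<Phi>0 \<subseteq> \<Phi>" "finite \<Phi>0" and "finite F"
    have "\<forall>\<phi>\<in>\<Phi>0. \<exists>i. i \<in> I \<and> (\<forall>b. sat M \<phi> (E(0 := b)) \<longleftrightarrow> b \<in> T i)"
      using \<Phi>0(1) unfolding \<Phi>_def by blast
    then obtain ii where ii: "\<forall>\<phi>\<in>\<Phi>0. ii \<phi> \<in> I \<and> (\<forall>b. sat M \<phi> (E(0 := b)) \<longleftrightarrow> b \<in> T (ii \<phi>))"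
      by (rule bchoice[THEN exE])
    then obtain c where "c \<notin> F" "\<forall>i\<in>ii ` \<Phi>0. c \<in> T i"
      using fip[of "ii ` \<Phi>0" F] \<Phi>0(2) \<open>finite F\<close> by blast
    then show "\<exists>c. c \<notin> F \<and> (\<forall>\<phi>\<in>\<Phi>0. sat M \<phi> (E(0 := c)))" using ii by blast
  qed blast
  show ?thesis
  proof (rule that)
    show "\<forall>i\<in>I. b \<in> T i"
    proof
      fix i assume i: "i \<in> I"
      then obtain \<phi> where \<phi>: "\<forall>b. sat M \<phi> (E(0 := b)) \<longleftrightarrow> b \<in> T i" using defs defining_fm by blast
      then have "\<phi> \<in> \<Phi>" using i by (auto simp: \<Phi>_def)
      then show "b \<in> T i" using b(1) \<phi> by blast
    qed
    show "b \<notin> acl M B"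
    proof
      assume "b \<in> acl M B"
      then obtain T' where T': "definable_unary M B T'" "finite T'" "b \<in> T'"
        by (auto simp: acl_iff_definable_finite)
      then obtain \<psi> where \<psi>: "\<forall>b. sat M \<psi> (E(0 := b)) \<longleftrightarrow> b \<in> T'" using defining_fm by blast
      then have "\<not> sat M \<psi> (E(0 := b))" using b(2)[of \<psi>] T'(2) by simp
      then show False using \<psi> T'(3) by blast
    qed
  qed
qed

section \<open>Curves and cylinders\<close>

definition dim1_tuple :: "('f, 'r, 'a) struct \<Rightarrow> 'a set \<Rightarrow> 'a list \<Rightarrow> bool" where
  "dim1_tuple M B xs \<longleftrightarrow> (\<forall>i j. i < j \<longrightarrow> j < length xs \<longrightarrow>
      xs ! i \<in> acl M B \<or> xs ! j \<in> acl M (insert (xs ! i) B))"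

lemma dim_le_1_iff: "dim_le M B X (Suc 0) \<longleftrightarrow> (\<forall>xs\<in>X. dim1_tuple M B xs)"
proof
  assume h: "dim_le M B X (Suc 0)"
  show "\<forall>xs\<in>X. dim1_tuple M B xs"
  proof (unfold dim1_tuple_def, intro ballI allI impI, rule ccontr)
    fix xs i j assume xs: "xs \<in> X" and ij: "i < j" "j < length xs"
      and n: "\<not> (xs ! i \<in> acl M B \<or> xs ! j \<in> acl M (insert (xs ! i) B))"
    have "\<forall>ja<2. xs ! ([i, j] ! ja) \<notin> acl M (B \<union> set (map ((!) xs) (take ja [i, j])))"
      using n by (auto simp: less_2_cases_iff insert_commute)
    then have "indep_ge M B X 2"
      unfolding indep_ge_def using xs ij by (intro bexI[OF _ xs] exI[of _ "[i, j]"]) auto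
    then show False using h unfolding dim_le_def by fastforce
  qed
next
  assume h: "\<forall>xs\<in>X. dim1_tuple M B xs"
  show "dim_le M B X (Suc 0)" unfolding dim_le_def
  proof (intro allI impI, rule ccontr)
    fix d assume "indep_ge M B X d" "\<not> d \<le> Suc 0"
    then obtain xs idx where xs: "xs \<in> X" "length idx = d" "sorted_wrt (<) idx"
      "\<forall>i\<in>set idx. i < length xs"
      "\<forall>j<d. xs ! (idx ! j) \<notin> acl M (B \<union> set (map ((!) xs) (take j idx)))"
      and d: "Suc 0 < d"
      unfolding indep_ge_def by auto
    have "idx ! 0 < idx ! 1" using sorted_wrt_nth_less[OF xs(3), of 0 1] d xs(2) by simp
    moreover have "idx ! 1 < length xs" using xs(2,4) d by auto
    moreover have "take 1 idx = [idx ! 0]" using d xs(2) by (cases idx) auto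
    then have "xs ! (idx ! 0) \<notin> acl M B"
      "xs ! (idx ! 1) \<notin> acl M (insert (xs ! (idx ! 0)) B)"
      using xs(5)[rule_format, of 0] xs(5)[rule_format, of 1] d by simp_all
    ultimately show False using h xs(1) unfolding dim1_tuple_def by blast
  qed
qed

lemma dim1_tuple_mono:
  assumes "dim1_tuple M B xs" "B \<subseteq> B'"
  shows "dim1_tuple M B' xs"
proof -
  have "acl M B \<subseteq> acl M B'" "acl M (insert a B) \<subseteq> acl M (insert a B')" for a
    using assms(2) by (intro acl_mono; blast)+
  then show ?thesis using assms(1) unfolding dim1_tuple_def by blast
qed

lemma dim1_tuple_prefix: "dim1_tuple M B (xs @ ys) \<Longrightarrow> dim1_tuple M B xs"
  unfolding dim1_tuple_def
proof (intro allI impI)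
  fix i j assume h: "\<forall>i j. i < j \<longrightarrow> j < length (xs @ ys) \<longrightarrow>
      (xs @ ys) ! i \<in> acl M B \<or> (xs @ ys) ! j \<in> acl M (insert ((xs @ ys) ! i) B)"
    and ij: "i < j" "j < length xs"
  then have "(xs @ ys) ! i = xs ! i" "(xs @ ys) ! j = xs ! j" by (auto simp: nth_append)
  then show "xs ! i \<in> acl M B \<or> xs ! j \<in> acl M (insert (xs ! i) B)"
    using h[rule_format, of i j] ij by simp
qed

lemma dim1_tuple_if_acl_point:
  fixes M :: "('f, 'r, 'a) struct"
  assumes ex: "exchange M" and alg: "\<forall>t<length z. z ! t \<in> acl M (insert y B)"
  shows "dim1_tuple M B z"
  unfolding dim1_tuple_def
proof (intro allI impI)
  fix i j assume ij: "i < j" "j < length z"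
  show "z ! i \<in> acl M B \<or> z ! j \<in> acl M (insert (z ! i) B)"
  proof (cases "z ! i \<in> acl M B")
    case False
    then have "z ! i \<in> acl M (insert y B) - acl M B" using alg ij by simp
    then have yi: "y \<in> acl M (insert (z ! i) B)"
      using ex unfolding exchange_def by blast
    have "acl M (insert y B) \<subseteq> acl M (insert y (insert (z ! i) B))"
      by (rule acl_mono) blast
    then have "z ! j \<in> acl M (insert y (insert (z ! i) B))" using alg ij by auto
    then show ?thesis using acl_trans[OF _ yi] by blast
  qed simp
qed

fun fm_mentioning :: "nat list \<Rightarrow> ('f, 'r) fm" where
  "fm_mentioning [] = fm_true"
| "fm_mentioning (v # vs) = Conj (Eq (Var v) (Var v)) (fm_mentioning vs)"

lemma sat_fm_mentioning [simp]: "sat M (fm_mentioning vs) e"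
  by (induction vs) auto

lemma fv_fm_mentioning [simp]: "fv (fm_mentioning vs) = set vs"
  by (induction vs) auto

text \<open>Since \<open>dim_le\<close> in \<open>is_curve\<close> is measured over the parameters actually occurring in the
  defining formula, we need defining formulas with a prescribed finite parameter set; the
  missing parameters are mentioned by trivial conjuncts \<open>x = x\<close>.\<close>

lemma definable_with_exact_params:
  fixes M :: "('f, 'r, 'a) struct"
  assumes "definable M P k X" "finite P"
  obtains \<phi> e where "params k \<phi> e = P" "X = defset M k \<phi> e"
proof -
  obtain \<phi>0 e0 where h: "\<And>xs. length xs = k \<Longrightarrow> xs \<in> X \<longleftrightarrow> sat M \<phi>0 (assign k xs e0)"
    "\<And>xs. xs \<in> X \<Longrightarrow> length xs = k" "\<And>w. w \<in> fv \<phi>0 \<Longrightarrow> k \<le> w \<Longrightarrow> e0 w \<in> P"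
    by (rule definableE[OF assms(1)]) blast
  obtain ps where ps: "set ps = P" using finite_list[OF assms(2)] by blast
  define K where "K = Suc (Max (insert k (fv \<phi>0)))"
  have K: "v < K" if "v \<in> insert k (fv \<phi>0)" for v
    using less_Suc_Max_insert[OF finite_fv that] by (simp add: K_def)
  define \<phi> where "\<phi> = Conj \<phi>0 (fm_mentioning (map (\<lambda>j. K + j) [0..<length ps]))"
  define e where "e = (\<lambda>v. if v < K then e0 v else ps ! (v - K))"
  have "params k \<phi> e = P"
  proof
    show "params k \<phi> e \<subseteq> P"
    proof
      fix a assume "a \<in> params k \<phi> e"
      then obtain w where "w \<in> fv \<phi> - {..<k}" "a = e w" unfolding params_def by blast
      then have w: "w \<in> fv \<phi>" "k \<le> w" "a = e w" by auto
      show "a \<in> P"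
      proof (cases "w \<in> fv \<phi>0")
        case True
        then show ?thesis using K w h(3) by (simp add: e_def)
      next
        case False
        then have "K \<le> w" "w < K + length ps" using w(1) by (auto simp: \<phi>_def)
        then show ?thesis using w(3) ps by (auto simp: e_def)
      qed
    qed
    show "P \<subseteq> params k \<phi> e"
    proof
      fix a assume "a \<in> P"
      then obtain j where j: "j < length ps" "ps ! j = a" using ps by (auto simp: in_set_conv_nth)
      then have "K + j \<in> fv \<phi>" "k \<le> K + j" "e (K + j) = a"
        using K[of k] by (auto simp: \<phi>_def e_def)
      then show "a \<in> params k \<phi> e" unfolding params_def by force
    qed
  qed
  moreover have "sat M \<phi>0 (assign k xs e) = sat M \<phi>0 (assign k xs e0)" for xs
    by (rule sat_cong) (auto simp: assign_def e_def dest: K[OF insertI2])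
  then have "X = defset M k \<phi> e" using h(1,2) by (auto simp: defset_assign \<phi>_def)
  ultimately show ?thesis by (rule that)
qed

lemma is_curveI:
  fixes M :: "('f, 'r, 'a) struct"
  assumes "definable M P k X" "finite P" "P \<subseteq> A" "\<forall>xs\<in>X. dim1_tuple M P xs"
  shows "is_curve M A k X"
proof -
  obtain \<phi> e where "params k \<phi> e = P" "X = defset M k \<phi> e"
    using definable_with_exact_params[OF assms(1,2)] by blast
  then show ?thesis unfolding is_curve_def One_nat_def dim_le_1_iff using assms(3,4) by blast
qed

lemma is_curveE:
  fixes M :: "('f, 'r, 'a) struct"
  assumes "is_curve M A k X"
  obtains P where "definable M P k X" "finite P" "P \<subseteq> A" "\<forall>xs\<in>X. dim1_tuple M P xs"
proof -
  obtain \<phi> e where h: "params k \<phi> e \<subseteq> A" "X = defset M k \<phi> e" "dim_le M (params k \<phi> e) X 1"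
    using assms unfolding is_curve_def by blast
  have "definable M (params k \<phi> e) k X" unfolding definable_def using h(2) by blast
  moreover have "finite (params k \<phi> e)" by (simp add: params_def finite_fv)
  ultimately show ?thesis using that h(1,3) by (simp add: dim_le_1_iff)
qed

lemma cylinderI:
  assumes "sorted_wrt (<) ix" "\<forall>i\<in>set ix. i < n" "is_curve M A (length ix) C"
  shows "cylinder M A n {xs. length xs = n \<and> map ((!) xs) ix \<in> C}"
  unfolding cylinder_def using assms by blast

lemma cylinder_lists: "cylinder M A n {xs. length xs = n}"
proof -
  have "definable M {} 0 {[]}" using definable_lists[of M "{}" 0] by simp
  then have "is_curve M A 0 {[]}" by (rule is_curveI) (auto simp: dim1_tuple_def)
  then show ?thesis using cylinderI[of "[]" n M A "{[]}"] by simp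
qed

lemma boolcomb_INT:
  assumes "finite I" "\<forall>i\<in>I. boolcomb U S (X i)" "boolcomb U S U"
  shows "boolcomb U S (U \<inter> \<Inter> (X ` I))"
  using assms
proof (induction I rule: finite_induct)
  case (insert i I)
  have "U \<inter> \<Inter> (X ` insert i I) = X i \<inter> (U \<inter> \<Inter> (X ` I))" by auto
  then show ?case using insert by (simp add: boolcomb.inter)
qed simp

lemma boolcomb_UN:
  assumes "finite I" "\<forall>i\<in>I. boolcomb U S (X i)" "boolcomb U S U"
  shows "boolcomb U S (\<Union> (X ` I))"
  using assms
proof (induction I rule: finite_induct)
  case empty
  then show ?case using boolcomb.compl[of U S U] by simp
qed (simp add: boolcomb.union)

section \<open>Common solutions of finitely many curves\<close>

lemma curves_common_params:
  fixes M :: "('f, 'r, 'a) struct" and r :: nat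
  assumes "\<forall>i<r. is_curve M A (k i) (C i)"
  obtains P where "finite P" "P \<subseteq> A"
    "\<And>i. i < r \<Longrightarrow> definable M P (k i) (C i)"
    "\<And>i xs. i < r \<Longrightarrow> xs \<in> C i \<Longrightarrow> dim1_tuple M P xs"
proof -
  have "\<exists>P. definable M P (k i) (C i) \<and> finite P \<and> P \<subseteq> A \<and> (\<forall>xs\<in>C i. dim1_tuple M P xs)"
    if "i \<in> {..<r}" for i
  proof -
    have "is_curve M A (k i) (C i)" using that assms by simp
    then obtain P where "definable M P (k i) (C i)" "finite P" "P \<subseteq> A"
      "\<forall>xs\<in>C i. dim1_tuple M P xs"
      by (rule is_curveE)
    then show ?thesis by blast
  qed
  then have "\<forall>i\<in>{..<r}. \<exists>P. definable M P (k i) (C i) \<and> finite P \<and> P \<subseteq> A \<and>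
      (\<forall>xs\<in>C i. dim1_tuple M P xs)"
    by blast
  from bchoice[OF this] obtain p where p: "\<forall>i\<in>{..<r}. definable M (p i) (k i) (C i) \<and>
      finite (p i) \<and> p i \<subseteq> A \<and> (\<forall>xs\<in>C i. dim1_tuple M (p i) xs)" ..
  show ?thesis
  proof (rule that[of "\<Union> (p ` {..<r})"])
    show "finite (\<Union> (p ` {..<r}))" using p by simp
    show "\<Union> (p ` {..<r}) \<subseteq> A" using p by blast
    show "definable M (\<Union> (p ` {..<r})) (k i) (C i)" if "i < r" for i
      using p that by (auto intro: definable_mono[of M "p i"])
    show "dim1_tuple M (\<Union> (p ` {..<r})) xs" if "i < r" "xs \<in> C i" for i xs
      using p that by (auto intro: dim1_tuple_mono[of M "p i"])
  qed
qed

locale curve_family =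
  fixes M :: "('f, 'r, 'a) struct" and n r :: nat and idx :: "nat \<Rightarrow> nat list"
    and C :: "nat \<Rightarrow> 'a list set" and P :: "'a set"
  assumes exchange_M: "exchange M" and saturated_M: "omega_saturated M"
    and idx: "\<And>i. i < r \<Longrightarrow> sorted_wrt (<) (idx i) \<and> (\<forall>j\<in>set (idx i). j < n)"
    and finite_P: "finite P" and P_acl: "P \<subseteq> acl M {}"
    and definable_C: "\<And>i. i < r \<Longrightarrow> definable M P (Suc (length (idx i))) (C i)"
    and dim1_C: "\<And>i xs. i < r \<Longrightarrow> xs \<in> C i \<Longrightarrow> dim1_tuple M P xs"
begin

abbreviation k :: "nat \<Rightarrow> nat" where
  "k i \<equiv> length (idx i)"

lemma length_C: "i < r \<Longrightarrow> xs \<in> C i \<Longrightarrow> length xs = Suc (k i)"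
  using definable_length[OF definable_C] .

lemma acl_P: "acl M P \<subseteq> acl M {}"
  using acl_trans_finite[OF finite_P P_acl] by auto

definition fibre :: "nat \<Rightarrow> 'a \<Rightarrow> 'a list set" where
  "fibre i y = {a. a @ [y] \<in> C i}"

definition coord_graph :: "nat \<Rightarrow> nat \<Rightarrow> 'a list set" where
  "coord_graph i j = {w. length w = Suc (Suc 0) \<and> (\<exists>a\<in>fibre i (w ! 1). a ! j = w ! 0)}"

definition coord_fibre :: "nat \<Rightarrow> nat \<Rightarrow> 'a \<Rightarrow> 'a set" where
  "coord_fibre i j y = {c. [c, y] \<in> coord_graph i j}"

lemma mem_coord_fibre: "c \<in> coord_fibre i j y \<longleftrightarrow> (\<exists>a\<in>fibre i y. a ! j = c)"
  by (simp add: coord_fibre_def coord_graph_def)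

lemma map_nth_append_shift:
  assumes "length ws = Suc (Suc 0)" "length zs = m"
  shows "map ((!) (ws @ zs)) (map (\<lambda>t. Suc (Suc t)) [0..<m] @ [1]) = zs @ [ws ! 1]"
  using assms by (intro nth_equalityI) (auto simp: nth_append less_Suc_eq)

lemma definable_coord_graph:
  assumes i: "i < r" and j: "j < k i"
  shows "definable M P (Suc (Suc 0)) (coord_graph i j)"
proof -
  define Q where "Q = {w. length w = Suc (Suc 0) + k i \<and>
      map ((!) w) (map (\<lambda>t. Suc (Suc t)) [0..<k i] @ [1]) \<in> C i}
    \<inter> {w. length w = Suc (Suc 0) + k i \<and> w ! 0 = w ! Suc (Suc j)}"
  have "definable M P (Suc (Suc 0) + k i) Q"
    unfolding Q_def using j
    by (intro definable_Int definable_vimage_coords[OF definable_C[OF i]] definable_nth_eq_nth) auto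
  moreover have "coord_graph i j =
      {ws. length ws = Suc (Suc 0) \<and> (\<exists>zs. length zs = k i \<and> ws @ zs \<in> Q)}"
  proof (rule set_eqI, rule iffI)
    fix w assume "w \<in> coord_graph i j"
    then obtain a where a: "length w = Suc (Suc 0)" "a @ [w ! 1] \<in> C i" "a ! j = w ! 0"
      by (auto simp: coord_graph_def fibre_def)
    have len: "length a = k i" using length_C[OF i a(2)] by simp
    have "map ((!) (w @ a)) (map (\<lambda>t. Suc (Suc t)) [0..<k i] @ [1]) \<in> C i"
      unfolding map_nth_append_shift[OF a(1) len] by (rule a(2))
    moreover have "(w @ a) ! 0 = (w @ a) ! Suc (Suc j)" using a len j by (simp add: nth_append)
    ultimately have "w @ a \<in> Q" using a(1) len by (simp add: Q_def)
    then show "w \<in> {ws. length ws = Suc (Suc 0) \<and> (\<exists>zs. length zs = k i \<and> ws @ zs \<in> Q)}"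
      using a(1) len by blast
  next
    fix w assume "w \<in> {ws. length ws = Suc (Suc 0) \<and> (\<exists>zs. length zs = k i \<and> ws @ zs \<in> Q)}"
    then obtain a where a: "length w = Suc (Suc 0)" "length a = k i" "w @ a \<in> Q" by blast
    then have "map ((!) (w @ a)) (map (\<lambda>t. Suc (Suc t)) [0..<k i] @ [1]) \<in> C i"
      "(w @ a) ! 0 = (w @ a) ! Suc (Suc j)"
      by (simp_all add: Q_def)
    then have "a @ [w ! 1] \<in> C i" "a ! j = w ! 0"
      using a(1,2) j by (simp_all only: map_nth_append_shift) (simp add: nth_append)
    then show "w \<in> coord_graph i j" using a(1) by (auto simp: coord_graph_def fibre_def)
  qed
  ultimately show ?thesis using definable_proj_append[of M P "Suc (Suc 0)" "k i" Q] by simp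
qed

lemma definable_unary_coord_fibre:
  assumes "i < r" "j < k i"
  shows "definable_unary M (insert y P) (coord_fibre i j y)"
proof -
  have "definable M (insert y P) (Suc (Suc 0)) (coord_graph i j)"
    using definable_coord_graph[OF assms] by (rule definable_mono) blast
  then have "definable M (insert y P) (Suc 0) {xs. length xs = Suc 0 \<and> xs @ [y] \<in> coord_graph i j}"
    by (rule definable_fix_last) simp
  then show ?thesis using definable_unaryI unfolding coord_fibre_def by fastforce
qed

lemma acl_if_in_finite_coord_fibre:
  assumes "i < r" "j < k i" "finite (coord_fibre i j y)" "c \<in> coord_fibre i j y"
  shows "c \<in> acl M (insert y P)"
  unfolding acl_iff_definable_finite using definable_unary_coord_fibre[OF assms(1,2)] assms(3,4)
  by blast

text \<open>If a coordinate fibre over \<open>y\<close> is infinite, saturation provides an element \<open>c\<close> of it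
  that is not algebraic over \<open>P \<union> {y}\<close>; the curve condition on the tuple through \<open>c\<close> and
  \<open>y\<close> together with exchange then forces \<open>y\<close> to be algebraic over \<open>P\<close>.\<close>

lemma acl_if_infinite_coord_fibre:
  assumes i: "i < r" and j: "j < k i" and inf: "infinite (coord_fibre i j y)"
  shows "y \<in> acl M P"
proof (rule ccontr)
  assume y: "y \<notin> acl M P"
  obtain c where c: "c \<in> coord_fibre i j y" "c \<notin> acl M (insert y P)"
  proof (rule omega_saturated_nonalgebraic[OF saturated_M, of "insert y P" "{()}"
        "\<lambda>_. coord_fibre i j y"])
    show "finite (insert y P)" using finite_P by simp
    show "\<forall>u\<in>{()}. definable_unary M (insert y P) (coord_fibre i j y)"
      using definable_unary_coord_fibre[OF i j] by simp
    show "\<exists>b. b \<notin> F \<and> (\<forall>u\<in>I0. b \<in> coord_fibre i j y)" if "finite F" for I0 F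
      using inf that by (metis ex_in_conv finite.emptyI finite_Diff2 Diff_iff)
  qed auto
  then obtain a where a: "a @ [y] \<in> C i" "a ! j = c" by (auto simp: mem_coord_fibre fibre_def)
  then have "length a = k i" using length_C[OF i] by fastforce
  then have "c \<in> acl M P \<or> y \<in> acl M (insert c P)"
    using dim1_C[OF i a(1), unfolded dim1_tuple_def, rule_format, of j "k i"] j a(2)
    by (simp add: nth_append)
  moreover have "c \<notin> acl M P"
    using c(2) acl_mono[of P "insert y P" M] by blast
  ultimately have "c \<in> acl M (insert y P)"
    using y exchange_M unfolding exchange_def by blast
  then show False using c(2) by simp
qed

lemma definable_unary_large_coord_fibre:
  assumes i: "i < r" and j: "j < k i"
  shows "definable_unary M P {y. \<exists>F. finite F \<and> card F = N \<and> F \<subseteq> coord_fibre i j y}"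
proof -
  define Swap where "Swap = {w. length w = Suc (Suc 0) \<and> map ((!) w) [1, 0] \<in> coord_graph i j}"
  have "definable M P (Suc (Suc 0)) Swap"
    unfolding Swap_def by (rule definable_vimage_coords[OF definable_coord_graph[OF i j]]) auto
  then have "definable M P (Suc 0)
      {xs. length xs = Suc 0 \<and> (\<exists>F. finite F \<and> card F = N \<and> (\<forall>c\<in>F. xs @ [c] \<in> Swap))}"
    by (rule definable_count_extensions)
  then have "definable_unary M P {y. [y] \<in>
      {xs. length xs = Suc 0 \<and> (\<exists>F. finite F \<and> card F = N \<and> (\<forall>c\<in>F. xs @ [c] \<in> Swap))}}"
    by (rule definable_unaryI)
  moreover have "[y, c] \<in> Swap \<longleftrightarrow> c \<in> coord_fibre i j y" for y c
    by (simp add: Swap_def coord_fibre_def)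
  ultimately show ?thesis unfolding subset_iff by (simp add: Ball_def)
qed

lemma finite_infinite_coord_fibres:
  assumes i: "i < r" and j: "j < k i"
  shows "finite {y. infinite (coord_fibre i j y)}"
proof (rule ccontr)
  assume inf: "infinite {y. infinite (coord_fibre i j y)}"
  define T where "T N = {y. \<exists>F. finite F \<and> card F = N \<and> F \<subseteq> coord_fibre i j y}" for N
  have definable_T: "definable_unary M P (T N)" for N
    unfolding T_def by (rule definable_unary_large_coord_fibre[OF i j])
  obtain y where y: "\<forall>N\<in>UNIV. y \<in> T N" "y \<notin> acl M P"
  proof (rule omega_saturated_nonalgebraic[OF saturated_M finite_P])
    show "\<forall>N\<in>UNIV. definable_unary M P (T N)" using definable_T by blast
    show "\<exists>b. b \<notin> F \<and> (\<forall>N\<in>I0. b \<in> T N)" if "finite F" for I0 F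
    proof -
      have "infinite ({y. infinite (coord_fibre i j y)} - F)" using inf that by simp
      then obtain y where y: "infinite (coord_fibre i j y)" "y \<notin> F"
        by (metis (no_types, lifting) Diff_iff ex_in_conv finite.emptyI mem_Collect_eq)
      have "y \<in> T N" for N
        using infinite_arbitrarily_large[OF y(1), of N] by (auto simp: T_def)
      then show ?thesis using y(2) by blast
    qed
  qed auto
  have "infinite (coord_fibre i j y)"
  proof
    assume f: "finite (coord_fibre i j y)"
    have "y \<in> T (Suc (card (coord_fibre i j y)))" using y(1) by blast
    then obtain F where F: "card F = Suc (card (coord_fibre i j y))" "F \<subseteq> coord_fibre i j y"
      unfolding T_def by blast
    then show False using card_mono[OF f F(2)] by simp
  qed
  then show False using acl_if_infinite_coord_fibre[OF i j] y(2) by blast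
qed

lemma finite_fibre:
  assumes i: "i < r" and fin: "\<forall>j<k i. finite (coord_fibre i j y)"
  shows "finite (fibre i y)"
proof -
  define V where "V = (\<Union>j<k i. coord_fibre i j y)"
  have "fibre i y \<subseteq> {xs. set xs \<subseteq> V \<and> length xs \<le> k i}"
  proof
    fix a assume a: "a \<in> fibre i y"
    then have len: "length a = k i" using length_C[OF i, of "a @ [y]"] by (simp add: fibre_def)
    have "set a \<subseteq> V"
    proof
      fix c assume "c \<in> set a"
      then obtain j where j: "j < k i" "a ! j = c" using len by (auto simp: in_set_conv_nth)
      then have "c \<in> coord_fibre i j y" using a unfolding mem_coord_fibre by blast
      then show "c \<in> V" using j(1) unfolding V_def by blast
    qed
    then show "a \<in> {xs. set xs \<subseteq> V \<and> length xs \<le> k i}" using len by simp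
  qed
  moreover have "finite {xs. set xs \<subseteq> V \<and> length xs \<le> k i}"
    using fin by (simp add: V_def finite_lists_length_le)
  ultimately show ?thesis by (rule finite_subset)
qed

definition exceptional :: "'a set" where
  "exceptional = (\<Union>i<r. {y. infinite (fibre i y)})"

lemma exceptional_subset:
  "exceptional \<subseteq> (\<Union>i<r. \<Union>j<k i. {y. infinite (coord_fibre i j y)})"
proof
  fix y assume "y \<in> exceptional"
  then obtain i where i: "i < r" "infinite (fibre i y)" by (auto simp: exceptional_def)
  then obtain j where "j < k i" "infinite (coord_fibre i j y)" using finite_fibre by blast
  then show "y \<in> (\<Union>i<r. \<Union>j<k i. {y. infinite (coord_fibre i j y)})" using i(1) by blast
qed

lemma finite_exceptional: "finite exceptional"
  using finite_infinite_coord_fibres by (auto intro: finite_subset[OF exceptional_subset])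

lemma exceptional_acl: "exceptional \<subseteq> acl M {}"
proof -
  have "(\<Union>i<r. \<Union>j<k i. {y. infinite (coord_fibre i j y)}) \<subseteq> acl M P"
  proof
    fix y assume "y \<in> (\<Union>i<r. \<Union>j<k i. {y. infinite (coord_fibre i j y)})"
    then obtain i j where "i < r" "j < k i" "infinite (coord_fibre i j y)" by blast
    then show "y \<in> acl M P" by (rule acl_if_infinite_coord_fibre)
  qed
  then show ?thesis using exceptional_subset acl_P by (meson subset_trans)
qed

lemma acl_coord_if_not_exceptional:
  assumes i: "i < r" and y: "y \<notin> exceptional" and a: "a @ [y] \<in> C i" and j: "j < k i"
  shows "a ! j \<in> acl M (insert y P)"
proof (rule acl_if_in_finite_coord_fibre[OF i j])
  have "finite (fibre i y)" using y i by (auto simp: exceptional_def)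
  moreover have "coord_fibre i j y \<subseteq> (\<lambda>a. a ! j) ` fibre i y" by (auto simp: mem_coord_fibre)
  ultimately show "finite (coord_fibre i j y)" by (rule finite_surj)
  show "a ! j \<in> coord_fibre i j y" using a by (auto simp: mem_coord_fibre fibre_def)
qed

abbreviation tuples :: "'a list set" where
  "tuples \<equiv> {xs. length xs = n}"

abbreviation cylinders :: "'a list set set" where
  "cylinders \<equiv> {Y. cylinder M (acl M {}) n Y}"

lemma boolcomb_tuples: "boolcomb tuples cylinders tuples"
  by (rule boolcomb.gen) (simp add: cylinder_lists)

definition solutions :: "'a list \<Rightarrow> 'a set" where
  "solutions x = {y. \<forall>i<r. map ((!) x) (idx i) @ [y] \<in> C i}"

lemma cylinder_fibre_at_exceptional:
  assumes i: "i < r" and y: "y \<in> exceptional"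
  shows "cylinder M (acl M {}) n {x. length x = n \<and> map ((!) x) (idx i) @ [y] \<in> C i}"
proof -
  have "definable M (insert y P) (Suc (k i)) (C i)"
    using definable_C[OF i] by (rule definable_mono) blast
  then have "definable M (insert y P) (k i) {a. length a = k i \<and> a @ [y] \<in> C i}"
    by (rule definable_fix_last) simp
  then have "is_curve M (acl M {}) (k i) {a. length a = k i \<and> a @ [y] \<in> C i}"
  proof (rule is_curveI)
    show "finite (insert y P)" using finite_P by simp
    show "insert y P \<subseteq> acl M {}" using P_acl exceptional_acl y by blast
    show "\<forall>a\<in>{a. length a = k i \<and> a @ [y] \<in> C i}. dim1_tuple M (insert y P) a"
      using dim1_C[OF i] by (blast intro: dim1_tuple_prefix dim1_tuple_mono)
  qed
  then have "cylinder M (acl M {}) n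
      {x. length x = n \<and> map ((!) x) (idx i) \<in> {a. length a = k i \<and> a @ [y] \<in> C i}}"
    using idx[OF i] by (intro cylinderI) auto
  then show ?thesis by simp
qed

definition solvers :: "'a \<Rightarrow> 'a list set" where
  "solvers y = {x. length x = n \<and> y \<in> solutions x}"

lemma boolcomb_solvers:
  assumes "y \<in> exceptional"
  shows "boolcomb tuples cylinders (solvers y)"
proof -
  have "solvers y =
      tuples \<inter> \<Inter> ((\<lambda>i. {x. length x = n \<and> map ((!) x) (idx i) @ [y] \<in> C i}) ` {..<r})"
    by (auto simp: solvers_def solutions_def)
  moreover have "boolcomb tuples cylinders
      (tuples \<inter> \<Inter> ((\<lambda>i. {x. length x = n \<and> map ((!) x) (idx i) @ [y] \<in> C i}) ` {..<r}))"
    using cylinder_fibre_at_exceptional[OF _ assms] boolcomb_tuples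
    by (intro boolcomb_INT) (auto intro: boolcomb.gen)
  ultimately show ?thesis by simp
qed

definition exceptional_trace :: "'a set \<Rightarrow> 'a list set" where
  "exceptional_trace F = {x. length x = n \<and> solutions x \<inter> exceptional = F}"

lemma boolcomb_exceptional_trace:
  assumes F: "F \<subseteq> exceptional"
  shows "boolcomb tuples cylinders (exceptional_trace F)"
proof -
  have fin: "finite F" "finite (exceptional - F)"
    using finite_exceptional F by (auto intro: finite_subset)
  have "exceptional_trace F = (tuples \<inter> \<Inter> (solvers ` F))
      \<inter> (tuples \<inter> \<Inter> ((\<lambda>y. tuples - solvers y) ` (exceptional - F)))"
    using F by (auto simp: exceptional_trace_def solvers_def)
  moreover have "boolcomb tuples cylinders (tuples \<inter> \<Inter> (solvers ` F))"
    using fin(1) F boolcomb_solvers boolcomb_tuples by (intro boolcomb_INT) auto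
  moreover have "boolcomb tuples cylinders (tuples \<inter> \<Inter> ((\<lambda>y. tuples - solvers y) ` (exceptional - F)))"
    using fin(2) boolcomb_solvers boolcomb_tuples by (intro boolcomb_INT) (auto intro: boolcomb.compl)
  ultimately show ?thesis by (simp add: boolcomb.inter)
qed

text \<open>Solutions outside the finite set \<open>exceptional\<close> are handled by a single cylinder, based on
  the coordinates \<open>coords\<close> occurring in some \<open>idx i\<close>; \<open>rel_idx i\<close> re-expresses \<open>idx i\<close> as
  positions within \<open>coords\<close>.\<close>

definition coords :: "nat list" where
  "coords = sorted_list_of_set (\<Union>i<r. set (idx i))"

lemma set_coords: "set coords = (\<Union>i<r. set (idx i))"
  unfolding coords_def by simp

lemma sorted_coords: "sorted_wrt (<) coords"
  unfolding coords_def by simp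

lemma coords_less: "\<forall>t\<in>set coords. t < n"
  using idx set_coords by auto

definition position :: "nat \<Rightarrow> nat" where
  "position v = (LEAST t. coords ! t = v)"

lemma position:
  assumes "v \<in> set coords"
  shows "position v < length coords \<and> coords ! position v = v"
proof -
  obtain t where t: "t < length coords" "coords ! t = v" using assms by (auto simp: in_set_conv_nth)
  have "coords ! position v = v" unfolding position_def using t(2) by (rule LeastI)
  moreover have "position v \<le> t" unfolding position_def using t(2) by (rule Least_le)
  ultimately show ?thesis using t(1) by simp
qed

lemma position_nth:
  assumes "t < length coords"
  shows "position (coords ! t) = t"
proof -
  have "position (coords ! t) < length coords" "coords ! position (coords ! t) = coords ! t"
    using position assms by simp_all
  moreover have "distinct coords" using sorted_coords strict_sorted_iff by blast
  ultimately show ?thesis using nth_eq_iff_index_eq assms by blast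
qed

definition rel_idx :: "nat \<Rightarrow> nat list" where
  "rel_idx i = map position (idx i)"

lemma rel_idx_less: "i < r \<Longrightarrow> t \<in> set (rel_idx i) \<Longrightarrow> t < length coords"
  using position set_coords by (auto simp: rel_idx_def)

lemma map_nth_rel_idx:
  assumes "i < r"
  shows "map ((!) (map ((!) x) coords)) (rel_idx i) = map ((!) x) (idx i)"
proof -
  have "map ((!) x) coords ! position v = x ! v" if "v \<in> set (idx i)" for v
  proof -
    have "v \<in> set coords" using that assms set_coords by blast
    then show ?thesis using position by simp
  qed
  then show ?thesis by (simp add: rel_idx_def)
qed

lemma map_nth_rel_idx_snoc:
  assumes "i < r" "length z = length coords"
  shows "map ((!) (z @ [y])) (rel_idx i @ [length coords]) = map ((!) z) (rel_idx i) @ [y]"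
  using assms rel_idx_less by (auto simp: nth_append)

lemma ex_rel_idx_nth:
  assumes "t < length coords"
  obtains i j where "i < r" "j < k i" "rel_idx i ! j = t"
proof -
  obtain i where i: "i < r" "coords ! t \<in> set (idx i)"
    using assms set_coords nth_mem by blast
  then obtain j where "j < k i" "idx i ! j = coords ! t" by (auto simp: in_set_conv_nth)
  then show ?thesis using i(1) position_nth[OF assms] by (intro that[of i j]) (simp_all add: rel_idx_def)
qed

definition generic_base :: "nat \<Rightarrow> 'a list set" where
  "generic_base m = {z. length z = length coords \<and> (\<exists>F. finite F \<and> card F = m \<and>
      (\<forall>y\<in>F. y \<notin> exceptional \<and> (\<forall>i<r. map ((!) z) (rel_idx i) @ [y] \<in> C i)))}"

lemma definable_generic_base: "definable M (P \<union> exceptional) (length coords) (generic_base m)"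
proof -
  let ?J = "length coords"
  define D where "D = ({w. length w = Suc ?J} \<inter> \<Inter> ((\<lambda>i. {w. length w = Suc ?J \<and>
        map ((!) w) (rel_idx i @ [?J]) \<in> C i}) ` {..<r}))
      \<inter> ({w. length w = Suc ?J} - \<Union> ((\<lambda>a. {w. length w = Suc ?J \<and> w ! ?J = a}) ` exceptional))"
  have C: "definable M (P \<union> exceptional) (Suc (k i)) (C i)" if "i < r" for i
    using definable_C[OF that] by (rule definable_mono) blast
  then have "definable M (P \<union> exceptional) (Suc ?J) D"
    unfolding D_def using C rel_idx_less finite_exceptional
    by (intro definable_Int definable_INT definable_Diff_lists definable_UN ballI
        definable_vimage_coords definable_nth_eq_param) (auto simp: less_Suc_eq rel_idx_def)
  moreover have "z @ [y] \<in> D \<longleftrightarrow> y \<notin> exceptional \<and> (\<forall>i<r. map ((!) z) (rel_idx i) @ [y] \<in> C i)"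
    if "length z = ?J" for z y
  proof -
    have "z @ [y] \<in> D \<longleftrightarrow>
        (\<forall>i<r. map ((!) (z @ [y])) (rel_idx i @ [?J]) \<in> C i) \<and> (z @ [y]) ! ?J \<notin> exceptional"
      unfolding D_def using that by auto
    moreover have "(z @ [y]) ! ?J = y" using that by (simp add: nth_append)
    ultimately show ?thesis using map_nth_rel_idx_snoc[OF _ that] by (metis (no_types, lifting))
  qed
  then have "generic_base m = {z. length z = ?J \<and> (\<exists>F. finite F \<and> card F = m \<and> (\<forall>y\<in>F. z @ [y] \<in> D))}"
    unfolding generic_base_def by (auto cong: conj_cong)
  ultimately show ?thesis using definable_count_extensions[of M "P \<union> exceptional" ?J D m] by simp
qed

text \<open>A tuple in \<open>generic_base m\<close>, \<open>m > 0\<close>, is algebraic over \<open>P\<close> and any one of its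
  non-exceptional solutions \<open>y\<close>, so by exchange it has dimension at most one.\<close>

lemma is_curve_generic_base:
  assumes "0 < m"
  shows "is_curve M (acl M {}) (length coords) (generic_base m)"
proof (rule is_curveI[OF definable_generic_base])
  show "finite (P \<union> exceptional)" using finite_P finite_exceptional by simp
  show "P \<union> exceptional \<subseteq> acl M {}" using P_acl exceptional_acl by simp
  show "\<forall>z\<in>generic_base m. dim1_tuple M (P \<union> exceptional) z"
  proof
    fix z assume "z \<in> generic_base m"
    then obtain F where F: "length z = length coords" "card F = m"
      "\<forall>y\<in>F. y \<notin> exceptional \<and> (\<forall>i<r. map ((!) z) (rel_idx i) @ [y] \<in> C i)"
      unfolding generic_base_def by blast
    obtain y where y: "y \<in> F" using F(2) assms by fastforce
    have "z ! t \<in> acl M (insert y (P \<union> exceptional))" if t: "t < length z" for t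
    proof -
      obtain i j where ij: "i < r" "j < k i" "rel_idx i ! j = t"
        using ex_rel_idx_nth t F(1) by metis
      have "map ((!) z) (rel_idx i) ! j \<in> acl M (insert y P)"
        using F(3) y ij by (intro acl_coord_if_not_exceptional) auto
      then have "z ! t \<in> acl M (insert y P)" using ij by (simp add: rel_idx_def)
      then show ?thesis using acl_mono[of "insert y P" "insert y (P \<union> exceptional)" M] by blast
    qed
    then show "dim1_tuple M (P \<union> exceptional) z"
      by (intro dim1_tuple_if_acl_point[OF exchange_M]) blast
  qed
qed

definition generic_count :: "nat \<Rightarrow> 'a list set" where
  "generic_count m = {x. length x = n \<and>
      (\<exists>F. finite F \<and> card F = m \<and> F \<subseteq> solutions x - exceptional)}"

lemma boolcomb_generic_count: "boolcomb tuples cylinders (generic_count m)"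
proof (cases "m = 0")
  case True
  then have "generic_count m = tuples" by (auto simp: generic_count_def)
  then show ?thesis using boolcomb_tuples by simp
next
  case False
  have "generic_count m = {x. length x = n \<and> map ((!) x) coords \<in> generic_base m}"
    by (auto simp: generic_count_def generic_base_def solutions_def map_nth_rel_idx subset_iff)
  moreover have "cylinder M (acl M {}) n {x. length x = n \<and> map ((!) x) coords \<in> generic_base m}"
    using False by (intro cylinderI sorted_coords coords_less is_curve_generic_base) simp
  ultimately show ?thesis by (simp add: boolcomb.gen)
qed

lemma solution_count_decomposition:
  "{x. length x = n \<and> (\<exists>Y. finite Y \<and> card Y = d \<and> Y \<subseteq> solutions x)} =
   (\<Union>F\<in>Pow exceptional. exceptional_trace F \<inter> generic_count (d - card F))"
proof (rule set_eqI, rule iffI)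
  fix x assume "x \<in> {x. length x = n \<and> (\<exists>Y. finite Y \<and> card Y = d \<and> Y \<subseteq> solutions x)}"
  then obtain Y where Y: "length x = n" "finite Y" "card Y = d" "Y \<subseteq> solutions x" by blast
  define F where "F = solutions x \<inter> exceptional"
  have "card Y \<le> card (Y \<inter> exceptional) + card (Y - exceptional)"
    using card_Un_le[of "Y \<inter> exceptional" "Y - exceptional"] by (simp add: Int_Diff_Un)
  moreover have "card (Y \<inter> exceptional) \<le> card F"
    using Y(4) finite_exceptional unfolding F_def by (intro card_mono) auto
  ultimately have "d - card F \<le> card (Y - exceptional)" using Y(3) by linarith
  then obtain F' where "F' \<subseteq> Y - exceptional" "card F' = d - card F" "finite F'"
    by (rule obtain_subset_with_card_n)
  then have "x \<in> generic_count (d - card F)" using Y(1,4) unfolding generic_count_def by blast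
  moreover have "x \<in> exceptional_trace F" using Y(1) by (simp add: exceptional_trace_def F_def)
  moreover have "F \<in> Pow exceptional" by (simp add: F_def)
  ultimately show "x \<in> (\<Union>F\<in>Pow exceptional. exceptional_trace F \<inter> generic_count (d - card F))"
    by blast
next
  fix x assume "x \<in> (\<Union>F\<in>Pow exceptional. exceptional_trace F \<inter> generic_count (d - card F))"
  then obtain F where "F \<in> Pow exceptional" "x \<in> exceptional_trace F"
    "x \<in> generic_count (d - card F)"
    by blast
  then obtain F' where F: "F \<subseteq> exceptional" "length x = n" "solutions x \<inter> exceptional = F"
    and F': "finite F'" "card F' = d - card F" "F' \<subseteq> solutions x - exceptional"
    unfolding exceptional_trace_def generic_count_def by blast
  have fin: "finite F" using F(1) finite_exceptional by (rule finite_subset)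
  show "x \<in> {x. length x = n \<and> (\<exists>Y. finite Y \<and> card Y = d \<and> Y \<subseteq> solutions x)}"
  proof (cases "d \<le> card F")
    case True
    then obtain Y where "Y \<subseteq> F" "card Y = d" "finite Y" by (rule obtain_subset_with_card_n)
    then show ?thesis using F(2,3) by blast
  next
    case False
    have "card (F \<union> F') = d" using card_Un_disjoint[OF fin F'(1)] F F' False by auto
    then show ?thesis using F F' fin by blast
  qed
qed

lemma boolcomb_solution_count:
  "boolcomb tuples cylinders {xs. length xs = n \<and>
     (\<exists>Y. finite Y \<and> card Y = d \<and> (\<forall>y\<in>Y. \<forall>i<r. map ((!) xs) (idx i) @ [y] \<in> C i))}"
proof -
  have "boolcomb tuples cylinders
      (\<Union>F\<in>Pow exceptional. exceptional_trace F \<inter> generic_count (d - card F))"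
  proof (rule boolcomb_UN[OF _ _ boolcomb_tuples])
    show "finite (Pow exceptional)" using finite_exceptional by simp
    show "\<forall>F\<in>Pow exceptional. boolcomb tuples cylinders (exceptional_trace F \<inter> generic_count (d - card F))"
      using boolcomb_exceptional_trace boolcomb_generic_count boolcomb.inter by blast
  qed
  then show ?thesis
    unfolding solution_count_decomposition[symmetric] by (simp add: solutions_def subset_iff Ball_def)
qed

end

theorem lemma3p7:
  fixes M :: "('f, 'r, 'a) struct"
    and d n r :: nat
    and idx :: "nat \<Rightarrow> nat list"
    and C :: "nat \<Rightarrow> 'a list set"
  assumes "geometric M"
    and "omega_saturated M"
    and "\<forall>i<r. sorted_wrt (<) (idx i) \<and> (\<forall>j\<in>set (idx i). j < n) \<and>
              is_curve M (acl M {}) (length (idx i) + 1) (C i)"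
  shows "boolcomb {xs. length xs = n} {Y. cylinder M (acl M {}) n Y}
           {xs. length xs = n \<and>
                (\<exists>Y. finite Y \<and> card Y = d \<and>
                     (\<forall>y\<in>Y. \<forall>i<r. map ((!) xs) (idx i) @ [y] \<in> C i))}"
proof -
  have "\<forall>i<r. is_curve M (acl M {}) (Suc (length (idx i))) (C i)" using assms(3) by simp
  then obtain P where "finite P" "P \<subseteq> acl M {}"
    "\<And>i. i < r \<Longrightarrow> definable M P (Suc (length (idx i))) (C i)"
    "\<And>i xs. i < r \<Longrightarrow> xs \<in> C i \<Longrightarrow> dim1_tuple M P xs"
    by (rule curves_common_params[where k = "\<lambda>i. Suc (length (idx i))"]) blast+
  then interpret curve_family M n r idx C P
    using assms by unfold_locales (simp_all add: geometric_def)
  show ?thesis by (rule boolcomb_solution_count)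
qed

end
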